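(* Let $\mathbb{k}$ be a field of characteristic $0$ containing a primitive $n$-th root of unity $\omega$, let $H=T_{n^2}(\omega)$ be the Taft Hopf algebra and $A=A_n(\omega)=\mathbb{k}[z]/(z^n-\omega)$ with $u$ the image of $z$. Let $A$ be the left $H$-module algebra with $g\cdot u=\omega u$ and $x\cdot u=1$, and the left $H$-comodule algebra via the algebra homomorphism $\rho:A\to H\otimes A$, $\rho(u)=\sum_{i=0}^{n-1}a_i\,x^ig^{-(i+1)}\otimes u^{i+1}$ where $a_i=(\omega-1)^i\omega^{i(i+1)/2}$. Then, for every $n$, $A$ is an object of the category ${}^H_H\mathcal{YD}$ of (left, left) Yetter–Drinfeld modules, i.e. for all $h\in H$ and $m\in A$, $$\sum h_1m_{-1}\otimes h_2\cdot m_0=\sum (h_1\cdot m)_{-1}h_2\otimes (h_1\cdot m)_0,$$ where $\rho(m)=\sum m_{-1}\otimes m_0$ and $\Delta(h)=\sum h_1\otimes h_2$.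
   Context: The Taft Hopf algebra is $H=T_{n^2}(\omega)=\mathbb{k}\langle x,g\mid x^n=0,\ g^n=1,\ xg=\omega gx\rangle$ with $\Delta(g)=g\otimes g$, $\Delta(x)=x\otimes 1+g\otimes x$, $\epsilon(g)=1$, $\epsilon(x)=0$, $S(g)=g^{-1}$, $S(x)=-g^{-1}x$. "Module algebra" means $h\cdot(ab)=\sum(h_1\cdot a)(h_2\cdot b)$ and $h\cdot 1=\epsilon(h)1$; so the action is determined by $g\cdot u=\omega u$, $x\cdot u=1$ (e.g. $x\cdot u^{i+1}=(\sum_{j=0}^i\omega^j)u^i$). $A$ is an $H$-comodule algebra via $\rho$, meaning $(\mathrm{id}\otimes\rho)\rho=(\Delta\otimes\mathrm{id})\rho$. *)

theory Defs
  imports Main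
begin

text \<open>
Fix n and omega.
 * An element of H = T_{n^2}(omega) is a coefficient function  f :: nat => nat => 'k,
   f a b being the coefficient of the PBW basis element g^a x^b  (0 <= a,b < n).
 * An element of A = k[z]/(z^n - omega) is  m :: nat => 'k,  m i the coefficient of u^i (0 <= i < n).
 * H (x) A  is  nat => nat => nat => 'k  (coefficient of g^a x^b (x) u^i).
 * H (x) H  is  nat => nat => nat => nat => 'k  (coefficient of g^a x^b (x) g^c x^d).
All constructions below vanish outside the index range {0..<n}.
\<close>

type_synonym 'k Hel = "nat \<Rightarrow> nat \<Rightarrow> 'k"
type_synonym 'k Ael = "nat \<Rightarrow> 'k"
type_synonym 'k HAel = "nat \<Rightarrow> nat \<Rightarrow> nat \<Rightarrow> 'k"
type_synonym 'k HHel = "nat \<Rightarrow> nat \<Rightarrow> nat \<Rightarrow> nat \<Rightarrow> 'k"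

definition primitive_root :: "nat \<Rightarrow> 'k::field \<Rightarrow> bool" where
  "primitive_root n w \<longleftrightarrow> 0 < n \<and> w ^ n = 1 \<and> (\<forall>k. 0 < k \<and> k < n \<longrightarrow> w ^ k \<noteq> 1)"

text \<open>Basis element g^a x^b, using g^n = 1 and x^n = 0.\<close>
definition Hb :: "nat \<Rightarrow> nat \<Rightarrow> nat \<Rightarrow> 'k::field Hel" where
  "Hb n a b = (\<lambda>c d. if c = a mod n \<and> d = b \<and> b < n then 1 else 0)"

text \<open>Product: (g^a x^b)(g^a' x^b') = omega^(b a') g^(a+a') x^(b+b'), from x g = omega g x.\<close>
definition Hmul :: "nat \<Rightarrow> 'k::field \<Rightarrow> 'k Hel \<Rightarrow> 'k Hel \<Rightarrow> 'k Hel" where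
  "Hmul n w f h = (\<lambda>c d. if c < n \<and> d < n then
     (\<Sum>a<n. \<Sum>b<n. \<Sum>a'<n. \<Sum>b'<n. f a b * h a' b' * w ^ (b * a') * Hb n (a + a') (b + b') c d)
     else 0)"

definition Hone :: "nat \<Rightarrow> 'k::field Hel" where "Hone n = Hb n 0 0"
definition Hg :: "nat \<Rightarrow> 'k::field Hel" where "Hg n = Hb n 1 0"
definition Hx :: "nat \<Rightarrow> 'k::field Hel" where "Hx n = Hb n 0 1"

definition Hpow :: "nat \<Rightarrow> 'k::field \<Rightarrow> 'k Hel \<Rightarrow> nat \<Rightarrow> 'k Hel" where
  "Hpow n w f k = (Hmul n w f ^^ k) (Hone n)"

definition Hginv :: "nat \<Rightarrow> 'k::field \<Rightarrow> 'k Hel" where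
  "Hginv n w = Hpow n w (Hg n) (n - 1)"

definition Heps :: "nat \<Rightarrow> 'k::field Hel \<Rightarrow> 'k" where
  "Heps n f = (\<Sum>a<n. f a 0)"

definition Ae :: "nat \<Rightarrow> nat \<Rightarrow> 'k::field Ael" where
  "Ae n i = (\<lambda>k. if k < n \<and> k = i then 1 else 0)"

definition Aone :: "nat \<Rightarrow> 'k::field Ael" where "Aone n = Ae n 0"
definition Au :: "nat \<Rightarrow> 'k::field Ael" where "Au n = Ae n 1"

text \<open>Product, using u^n = omega.\<close>
definition Amul :: "nat \<Rightarrow> 'k::field \<Rightarrow> 'k Ael \<Rightarrow> 'k Ael \<Rightarrow> 'k Ael" where
  "Amul n w m m' = (\<lambda>k. if k < n then
     (\<Sum>i<n. \<Sum>j<n. m i * m' j *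
        (if i + j < n then (if k = i + j then 1 else 0) else (if k = i + j - n then w else 0)))
     else 0)"

definition Apow :: "nat \<Rightarrow> 'k::field \<Rightarrow> 'k Ael \<Rightarrow> nat \<Rightarrow> 'k Ael" where
  "Apow n w m k = (Amul n w m ^^ k) (Aone n)"

definition HAt :: "nat \<Rightarrow> 'k::field Hel \<Rightarrow> 'k Ael \<Rightarrow> 'k HAel" where
  "HAt n f m = (\<lambda>a b i. if a < n \<and> b < n \<and> i < n then f a b * m i else 0)"

definition HAmul :: "nat \<Rightarrow> 'k::field \<Rightarrow> 'k HAel \<Rightarrow> 'k HAel \<Rightarrow> 'k HAel" where
  "HAmul n w T S = (\<lambda>c d k.
     \<Sum>a<n. \<Sum>b<n. \<Sum>i<n. \<Sum>a'<n. \<Sum>b'<n. \<Sum>i'<n.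
       T a b i * S a' b' i' * HAt n (Hmul n w (Hb n a b) (Hb n a' b')) (Amul n w (Ae n i) (Ae n i')) c d k)"

definition HApow :: "nat \<Rightarrow> 'k::field \<Rightarrow> 'k HAel \<Rightarrow> nat \<Rightarrow> 'k HAel" where
  "HApow n w T k = (HAmul n w T ^^ k) (HAt n (Hone n) (Aone n))"

definition HHt :: "nat \<Rightarrow> 'k::field Hel \<Rightarrow> 'k Hel \<Rightarrow> 'k HHel" where
  "HHt n f h = (\<lambda>a b a' b'. if a < n \<and> b < n \<and> a' < n \<and> b' < n then f a b * h a' b' else 0)"

definition HHmul :: "nat \<Rightarrow> 'k::field \<Rightarrow> 'k HHel \<Rightarrow> 'k HHel \<Rightarrow> 'k HHel" where
  "HHmul n w T S = (\<lambda>c d c' d'.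
     \<Sum>a<n. \<Sum>b<n. \<Sum>a'<n. \<Sum>b'<n. \<Sum>p<n. \<Sum>q<n. \<Sum>p'<n. \<Sum>q'<n.
       T a b a' b' * S p q p' q' *
       HHt n (Hmul n w (Hb n a b) (Hb n p q)) (Hmul n w (Hb n a' b') (Hb n p' q')) c d c' d')"

definition HHpow :: "nat \<Rightarrow> 'k::field \<Rightarrow> 'k HHel \<Rightarrow> nat \<Rightarrow> 'k HHel" where
  "HHpow n w T k = (HHmul n w T ^^ k) (HHt n (Hone n) (Hone n))"

definition Dg :: "nat \<Rightarrow> 'k::field HHel" where "Dg n = HHt n (Hg n) (Hg n)"
definition Dx :: "nat \<Rightarrow> 'k::field HHel" where
  "Dx n = (\<lambda>a b a' b'. HHt n (Hx n) (Hone n) a b a' b' + HHt n (Hg n) (Hx n) a b a' b')"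

definition Delta :: "nat \<Rightarrow> 'k::field \<Rightarrow> 'k Hel \<Rightarrow> 'k HHel" where
  "Delta n w f = (\<lambda>a b a' b'. \<Sum>c<n. \<Sum>d<n.
      f c d * HHmul n w (HHpow n w (Dg n) c) (HHpow n w (Dx n) d) a b a' b')"

definition acoef :: "'k::field \<Rightarrow> nat \<Rightarrow> 'k" where
  "acoef w i = (w - 1) ^ i * w ^ (i * (i + 1) div 2)"

definition rho_u :: "nat \<Rightarrow> 'k::field \<Rightarrow> 'k HAel" where
  "rho_u n w = (\<lambda>a b k. \<Sum>i<n. acoef w i *
      HAt n (Hmul n w (Hpow n w (Hx n) i) (Hpow n w (Hginv n w) (i + 1))) (Apow n w (Au n) (i + 1)) a b k)"

definition rho :: "nat \<Rightarrow> 'k::field \<Rightarrow> 'k Ael \<Rightarrow> 'k HAel" where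
  "rho n w m = (\<lambda>a b k. \<Sum>i<n. m i * HApow n w (rho_u n w) i a b k)"

section \<open>Actions of H on A, given by the action of basis elements on basis elements, extended bilinearly\<close>

definition act :: "nat \<Rightarrow> (nat \<Rightarrow> nat \<Rightarrow> nat \<Rightarrow> 'k::field Ael) \<Rightarrow> 'k Hel \<Rightarrow> 'k Ael \<Rightarrow> 'k Ael" where
  "act n act0 h m = (\<lambda>k. if k < n then
      (\<Sum>a<n. \<Sum>b<n. \<Sum>i<n. h a b * m i * act0 a b i k) else 0)"

definition is_module_algebra :: "nat \<Rightarrow> 'k::field \<Rightarrow> (nat \<Rightarrow> nat \<Rightarrow> nat \<Rightarrow> 'k Ael) \<Rightarrow> bool" where
  "is_module_algebra n w act0 \<longleftrightarrow>
     (\<forall>h h' m. act n act0 (Hmul n w h h') m = act n act0 h (act n act0 h' m)) \<and>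
     (\<forall>m. act n act0 (Hone n) m = (\<lambda>k. if k < n then m k else 0)) \<and>
     (\<forall>h m m'. act n act0 h (Amul n w m m') =
        (\<lambda>k. \<Sum>a<n. \<Sum>b<n. \<Sum>a'<n. \<Sum>b'<n. Delta n w h a b a' b' *
             Amul n w (act n act0 (Hb n a b) m) (act n act0 (Hb n a' b') m') k)) \<and>
     (\<forall>h. act n act0 h (Aone n) = (\<lambda>k. Heps n h * Aone n k))"

definition YD_lhs :: "nat \<Rightarrow> 'k::field \<Rightarrow> (nat \<Rightarrow> nat \<Rightarrow> nat \<Rightarrow> 'k Ael) \<Rightarrow> 'k Hel \<Rightarrow> 'k Ael \<Rightarrow> 'k HAel" where
  "YD_lhs n w act0 h m = (\<lambda>c d k.
     \<Sum>a<n. \<Sum>b<n. \<Sum>a'<n. \<Sum>b'<n. \<Sum>p<n. \<Sum>q<n. \<Sum>i<n.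
       Delta n w h a b a' b' * rho n w m p q i *
       HAt n (Hmul n w (Hb n a b) (Hb n p q)) (act n act0 (Hb n a' b') (Ae n i)) c d k)"

definition YD_rhs :: "nat \<Rightarrow> 'k::field \<Rightarrow> (nat \<Rightarrow> nat \<Rightarrow> nat \<Rightarrow> 'k Ael) \<Rightarrow> 'k Hel \<Rightarrow> 'k Ael \<Rightarrow> 'k HAel" where
  "YD_rhs n w act0 h m = (\<lambda>c d k.
     \<Sum>a<n. \<Sum>b<n. \<Sum>a'<n. \<Sum>b'<n. \<Sum>p<n. \<Sum>q<n. \<Sum>i<n.
       Delta n w h a b a' b' * rho n w (act n act0 (Hb n a b) m) p q i *
       HAt n (Hmul n w (Hb n p q) (Hb n a' b')) (Ae n i) c d k)"

end

theory Submission
  imports Defs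
begin

text \<open>
  Both sides of the Yetter--Drinfeld identity are linear in \<open>h\<close> and \<open>m\<close>, and the set of
  \<open>h\<close> for which it holds for all \<open>m\<close> is closed under products, because \<open>\<Delta>\<close>, the action
  and the multiplication of \<open>H \<otimes> A\<close> are multiplicative.  Since
  \<open>\<Delta>(g\<^sup>a x\<^sup>b) = \<Delta>(g)\<^sup>a \<Delta>(x)\<^sup>b\<close>, it suffices to check \<open>h = g\<close> and \<open>h = x\<close>.
  For these two, the twisted Leibniz rules \<open>g\<cdot>(ab) = (g\<cdot>a)(g\<cdot>b)\<close> and
  \<open>x\<cdot>(ab) = (x\<cdot>a)b + (g\<cdot>a)(x\<cdot>b)\<close>, together with multiplicativity of \<open>\<rho>\<close>, reduce
  the identity for \<open>m = u\<^sup>i\<close> to the identity for \<open>m = u\<close>.  For \<open>m = u\<close> it is a direct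
  computation with the explicit formula for \<open>\<rho>(u)\<close>: the \<open>g\<close>-identity holds termwise,
  and in the \<open>x\<close>-identity consecutive terms cancel precisely because of a recurrence
  satisfied by the coefficients \<open>a\<^sub>i\<close>.
\<close>

lemma if_one_zero_mult:
  "(if P then 1 else 0) * (x::'a::semiring_1) = (if P then x else 0)"
  "x * (if P then 1 else 0) = (if P then x else 0)"
  by auto

lemma if_conj_zero: "(if P \<and> Q then x else 0) = (if P then if Q then x else 0 else 0)"
  by auto

lemma sum_if_zero: "(\<Sum>x\<in>A. if P then f x else 0) = (if P then (\<Sum>x\<in>A. f x) else 0)"
  by auto

lemma if_zero_mult:
  "(if P then x else 0) * (y::'a::semiring_0) = (if P then x * y else 0)"
  "y * (if P then x else 0) = (if P then y * x else 0)"
  by auto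

lemmas delta_simps = if_one_zero_mult if_conj_zero sum_if_zero if_zero_mult sum.delta sum.delta'

lemma sum_single_support:
  assumes "finite I" "\<And>u. u \<in> I \<Longrightarrow> u \<noteq> a \<Longrightarrow> f u = 0"
  shows "(\<Sum>u\<in>I. f u) = (if a \<in> I then f a else 0)"
proof -
  have "(\<Sum>u\<in>I. f u) = (\<Sum>u\<in>I. if u = a then f a else 0)"
    using assms(2) by (intro sum.cong) auto
  then show ?thesis using assms(1) by simp
qed

lemma sum2_single_support:
  assumes "finite A" "finite B"
    "\<And>p q. p \<in> A \<Longrightarrow> q \<in> B \<Longrightarrow> (p, q) \<noteq> (a, b) \<Longrightarrow> F p q = 0"
  shows "(\<Sum>p\<in>A. \<Sum>q\<in>B. F p q) = (if a \<in> A \<and> b \<in> B then F a b else 0)"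
proof -
  have "(\<Sum>p\<in>A. \<Sum>q\<in>B. F p q) = (if a \<in> A then (\<Sum>q\<in>B. F a q) else 0)"
    using assms by (intro sum_single_support) (auto intro!: sum.neutral)
  moreover have "(\<Sum>q\<in>B. F a q) = (if b \<in> B then F a b else 0)" if "a \<in> A"
    using assms that by (intro sum_single_support) auto
  ultimately show ?thesis by auto
qed

lemma sum4_single_support:
  assumes "finite A" "finite B" "finite C" "finite D"
    "\<And>p q r s. p \<in> A \<Longrightarrow> q \<in> B \<Longrightarrow> r \<in> C \<Longrightarrow> s \<in> D \<Longrightarrow>
      (p, q, r, s) \<noteq> (a, b, c, d) \<Longrightarrow> F p q r s = 0"
  shows "(\<Sum>p\<in>A. \<Sum>q\<in>B. \<Sum>r\<in>C. \<Sum>s\<in>D. F p q r s) =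
    (if a \<in> A \<and> b \<in> B \<and> c \<in> C \<and> d \<in> D then F a b c d else 0)"
proof -
  have "(\<Sum>p\<in>A. \<Sum>q\<in>B. \<Sum>r\<in>C. \<Sum>s\<in>D. F p q r s) =
    (if a \<in> A \<and> b \<in> B then (\<Sum>r\<in>C. \<Sum>s\<in>D. F a b r s) else 0)"
    using assms by (intro sum2_single_support) (auto intro!: sum.neutral)
  moreover have "(\<Sum>r\<in>C. \<Sum>s\<in>D. F a b r s) = (if c \<in> C \<and> d \<in> D then F a b c d else 0)"
    if "a \<in> A" "b \<in> B"
    using assms that by (intro sum2_single_support) auto
  ultimately show ?thesis by auto
qed

lemma sum_outer_to_inner3:
  "(\<Sum>i\<in>I. \<Sum>a\<in>A. \<Sum>b\<in>B. f i a b) = (\<Sum>a\<in>A. \<Sum>b\<in>B. \<Sum>i\<in>I. f i a b)"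
  by (rule trans[OF sum.swap], rule sum.cong[OF refl], rule sum.swap)

lemma sum_inner_to_outer4:
  "(\<Sum>p\<in>A. \<Sum>q\<in>B. \<Sum>i\<in>C. \<Sum>a\<in>D. g p q i a) = (\<Sum>a\<in>D. \<Sum>p\<in>A. \<Sum>q\<in>B. \<Sum>i\<in>C. g p q i a)"
proof -
  have "(\<Sum>p\<in>A. \<Sum>q\<in>B. \<Sum>i\<in>C. \<Sum>a\<in>D. g p q i a) = (\<Sum>p\<in>A. \<Sum>a\<in>D. \<Sum>q\<in>B. \<Sum>i\<in>C. g p q i a)"
    by (rule sum.cong[OF refl]) (rule sum_outer_to_inner3[symmetric])
  also have "\<dots> = (\<Sum>a\<in>D. \<Sum>p\<in>A. \<Sum>q\<in>B. \<Sum>i\<in>C. g p q i a)"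
    by (rule sum.swap)
  finally show ?thesis .
qed

lemma sum_cartesian4:
  "(\<Sum>a\<in>A. \<Sum>b\<in>B. \<Sum>c\<in>C. \<Sum>d\<in>D. g a b c d) =
   (\<Sum>x\<in>A\<times>B\<times>C\<times>D. g (fst x) (fst (snd x)) (fst (snd (snd x))) (snd (snd (snd x))))"
  by (simp add: sum.cartesian_product split_def)

lemma sum_swap4_4:
  "(\<Sum>p\<in>A. \<Sum>q\<in>B. \<Sum>p'\<in>C. \<Sum>q'\<in>D. \<Sum>a\<in>E. \<Sum>b\<in>F. \<Sum>a'\<in>G. \<Sum>b'\<in>H. f p q p' q' a b a' b') =
   (\<Sum>a\<in>E. \<Sum>b\<in>F. \<Sum>a'\<in>G. \<Sum>b'\<in>H. \<Sum>p\<in>A. \<Sum>q\<in>B. \<Sum>p'\<in>C. \<Sum>q'\<in>D. f p q p' q' a b a' b')"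
proof -
  let ?f = "\<lambda>x y. f (fst x) (fst (snd x)) (fst (snd (snd x))) (snd (snd (snd x)))
    (fst y) (fst (snd y)) (fst (snd (snd y))) (snd (snd (snd y)))"
  have "(\<Sum>p\<in>A. \<Sum>q\<in>B. \<Sum>p'\<in>C. \<Sum>q'\<in>D. \<Sum>a\<in>E. \<Sum>b\<in>F. \<Sum>a'\<in>G. \<Sum>b'\<in>H. f p q p' q' a b a' b') =
      (\<Sum>x\<in>A\<times>B\<times>C\<times>D. \<Sum>y\<in>E\<times>F\<times>G\<times>H. ?f x y)"
    by (rule trans[OF sum_cartesian4], rule sum.cong[OF refl], rule sum_cartesian4)
  also have "\<dots> = (\<Sum>y\<in>E\<times>F\<times>G\<times>H. \<Sum>x\<in>A\<times>B\<times>C\<times>D. ?f x y)"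
    by (rule sum.swap)
  also have "\<dots> = (\<Sum>a\<in>E. \<Sum>b\<in>F. \<Sum>a'\<in>G. \<Sum>b'\<in>H. \<Sum>p\<in>A. \<Sum>q\<in>B. \<Sum>p'\<in>C. \<Sum>q'\<in>D. f p q p' q' a b a' b')"
    by (rule sym, rule trans[OF sum_cartesian4], rule sum.cong[OF refl], rule sum_cartesian4)
  finally show ?thesis .
qed

section \<open>Twisted convolution algebras\<close>

text \<open>
  \<open>tconv I m c\<close> is the multiplication of the algebra with basis \<open>I\<close> and structure constants
  \<open>e\<^sub>s e\<^sub>t = c s t \<cdot> e\<^bsub>m s t\<^esub>\<close>.
\<close>

definition tconv ::
  "'i set \<Rightarrow> ('i \<Rightarrow> 'i \<Rightarrow> 'i) \<Rightarrow> ('i \<Rightarrow> 'i \<Rightarrow> 'k::comm_ring_1) \<Rightarrow> ('i \<Rightarrow> 'k) \<Rightarrow> ('i \<Rightarrow> 'k) \<Rightarrow> 'i \<Rightarrow> 'k"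
  where "tconv I m c T S z = (\<Sum>s\<in>I. \<Sum>t\<in>I. T s * S t * c s t * (if m s t = z then 1 else 0))"

lemma tconv_tconv_left:
  assumes "finite I" and closed: "\<forall>s\<in>I. \<forall>t\<in>I. c s t \<noteq> 0 \<longrightarrow> m s t \<in> I"
  shows "tconv I m c (tconv I m c T S) R z = (\<Sum>s\<in>I. \<Sum>t\<in>I. \<Sum>r\<in>I.
    T s * S t * R r * (c s t * c (m s t) r * (if m (m s t) r = z then 1 else 0)))"
proof -
  let ?F = "\<lambda>r s t u. T s * S t * c s t * (if m s t = u then 1 else 0) *
    (R r * c u r * (if m u r = z then 1 else 0))"
  have "tconv I m c (tconv I m c T S) R z = (\<Sum>u\<in>I. \<Sum>r\<in>I. \<Sum>s\<in>I. \<Sum>t\<in>I. ?F r s t u)"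
    by (simp add: tconv_def sum_distrib_right mult.assoc)
  also have "\<dots> = (\<Sum>r\<in>I. \<Sum>s\<in>I. \<Sum>t\<in>I. \<Sum>u\<in>I. ?F r s t u)"
    by (rule trans[OF sum.swap], rule sum.cong[OF refl], rule sum_outer_to_inner3)
  also have "\<dots> = (\<Sum>r\<in>I. \<Sum>s\<in>I. \<Sum>t\<in>I.
      T s * S t * R r * (c s t * c (m s t) r * (if m (m s t) r = z then 1 else 0)))"
  proof (intro sum.cong refl)
    fix r s t assume "r \<in> I" "s \<in> I" "t \<in> I"
    then show "(\<Sum>u\<in>I. ?F r s t u) =
      T s * S t * R r * (c s t * c (m s t) r * (if m (m s t) r = z then 1 else 0))"
      using closed \<open>s \<in> I\<close> \<open>t \<in> I\<close> assms(1)
      by (subst sum_single_support[where a="m s t"]) (auto, metis mult_zero_left mult_zero_right)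
  qed
  also have "\<dots> = (\<Sum>s\<in>I. \<Sum>t\<in>I. \<Sum>r\<in>I.
      T s * S t * R r * (c s t * c (m s t) r * (if m (m s t) r = z then 1 else 0)))"
    by (rule sum_outer_to_inner3)
  finally show ?thesis .
qed

lemma tconv_tconv_right:
  assumes "finite I" and closed: "\<forall>s\<in>I. \<forall>t\<in>I. c s t \<noteq> 0 \<longrightarrow> m s t \<in> I"
  shows "tconv I m c T (tconv I m c S R) z = (\<Sum>s\<in>I. \<Sum>t\<in>I. \<Sum>r\<in>I.
    T s * S t * R r * (c t r * c s (m t r) * (if m s (m t r) = z then 1 else 0)))"
proof -
  let ?F = "\<lambda>s t r u. S t * R r * c t r * (if m t r = u then 1 else 0) *
    (T s * c s u * (if m s u = z then 1 else 0))"
  have "tconv I m c T (tconv I m c S R) z = (\<Sum>s\<in>I. \<Sum>u\<in>I. \<Sum>t\<in>I. \<Sum>r\<in>I. ?F s t r u)"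
    by (simp add: tconv_def sum_distrib_right sum_distrib_left mult.assoc mult.left_commute)
  also have "\<dots> = (\<Sum>s\<in>I. \<Sum>t\<in>I. \<Sum>r\<in>I. \<Sum>u\<in>I. ?F s t r u)"
    by (rule sum.cong[OF refl], rule sum_outer_to_inner3)
  also have "\<dots> = (\<Sum>s\<in>I. \<Sum>t\<in>I. \<Sum>r\<in>I.
      T s * S t * R r * (c t r * c s (m t r) * (if m s (m t r) = z then 1 else 0)))"
  proof (intro sum.cong refl)
    fix s t r assume "s \<in> I" "t \<in> I" "r \<in> I"
    then show "(\<Sum>u\<in>I. ?F s t r u) =
      T s * S t * R r * (c t r * c s (m t r) * (if m s (m t r) = z then 1 else 0))"
      using closed \<open>t \<in> I\<close> \<open>r \<in> I\<close> assms(1)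
      by (subst sum_single_support[where a="m t r"]) (auto, metis mult_zero_left mult_zero_right)
  qed
  finally show ?thesis .
qed

lemma tconv_assoc:
  assumes "finite I"
    and closed: "\<forall>s\<in>I. \<forall>t\<in>I. c s t \<noteq> 0 \<longrightarrow> m s t \<in> I"
    and cocycle: "\<And>s t r. s \<in> I \<Longrightarrow> t \<in> I \<Longrightarrow> r \<in> I \<Longrightarrow>
      c s t * c (m s t) r = c t r * c s (m t r)"
    and assoc: "\<And>s t r. s \<in> I \<Longrightarrow> t \<in> I \<Longrightarrow> r \<in> I \<Longrightarrow> c s t * c (m s t) r \<noteq> 0 \<Longrightarrow>
      m (m s t) r = m s (m t r)"
  shows "tconv I m c (tconv I m c T S) R z = tconv I m c T (tconv I m c S R) z"
proof -
  have "T s * S t * R r * (c s t * c (m s t) r * (if m (m s t) r = z then 1 else 0)) =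
        T s * S t * R r * (c t r * c s (m t r) * (if m s (m t r) = z then 1 else 0))"
    if str: "s \<in> I" "t \<in> I" "r \<in> I" for s t r
    using cocycle[OF str] assoc[OF str] by (cases "c s t * c (m s t) r = 0") auto
  then show ?thesis
    by (simp only: tconv_tconv_left[OF assms(1) closed] tconv_tconv_right[OF assms(1) closed]
        cong: sum.cong)
qed

lemma tconv_sum_left: "tconv I m c (\<lambda>s. \<Sum>j\<in>J. F j s) S z = (\<Sum>j\<in>J. tconv I m c (F j) S z)"
  unfolding tconv_def
  by (simp add: sum_distrib_right sum_outer_to_inner3[where I=J, symmetric] mult.assoc)

lemma tconv_sum_right: "tconv I m c T (\<lambda>s. \<Sum>j\<in>J. F j s) z = (\<Sum>j\<in>J. tconv I m c T (F j) z)"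
  unfolding tconv_def
  by (simp add: sum_distrib_left sum_distrib_right sum_outer_to_inner3[where I=J, symmetric]
      mult.assoc mult.left_commute)

lemma tconv_scal_left: "tconv I m c (\<lambda>s. a * F s) S z = a * tconv I m c F S z"
  unfolding tconv_def by (simp add: sum_distrib_left mult.assoc)

lemma tconv_scal_right: "tconv I m c T (\<lambda>s. a * F s) z = a * tconv I m c T F z"
  unfolding tconv_def by (simp add: sum_distrib_left mult_ac)

lemma tconv_add_left: "tconv I m c (\<lambda>s. F s + G s) S z = tconv I m c F S z + tconv I m c G S z"
  unfolding tconv_def by (simp add: distrib_right sum.distrib)

lemma tconv_add_right: "tconv I m c T (\<lambda>s. F s + G s) z = tconv I m c T F z + tconv I m c T G z"
  unfolding tconv_def by (simp add: distrib_left distrib_right sum.distrib)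

lemma tconv_unit_left:
  assumes "finite I" "e \<in> I" "\<And>t. t \<in> I \<Longrightarrow> c e t = 1 \<and> m e t = t" "\<And>s. s \<in> I \<Longrightarrow> E s = (if s = e then 1 else 0)"
  shows "tconv I m c E S z = (if z \<in> I then S z else 0)"
proof -
  have "tconv I m c E S z = (\<Sum>t\<in>I. S t * (if t = z then 1 else 0))"
    unfolding tconv_def using assms by (subst sum_single_support[where a=e]) (auto intro!: sum.cong)
  then show ?thesis using assms(1) by (simp add: if_one_zero_mult)
qed

lemma tconv_unit_right:
  assumes "finite I" "e \<in> I" "\<And>t. t \<in> I \<Longrightarrow> c t e = 1 \<and> m t e = t" "\<And>s. s \<in> I \<Longrightarrow> E s = (if s = e then 1 else 0)"
  shows "tconv I m c S E z = (if z \<in> I then S z else 0)"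
proof -
  have "tconv I m c S E z = (\<Sum>s\<in>I. \<Sum>t\<in>I. (if t = e then S s * c s e * (if m s e = z then 1 else 0) else 0))"
    unfolding tconv_def using assms by (intro sum.cong refl) auto
  also have "\<dots> = (\<Sum>s\<in>I. S s * (if s = z then 1 else 0))"
    using assms by (intro sum.cong refl) auto
  finally show ?thesis using assms(1) by (simp add: if_one_zero_mult)
qed

section \<open>Roots of unity and \<open>q\<close>-integers\<close>

lemma power_mod_order: "(w::'k::field) ^ n = 1 \<Longrightarrow> w ^ k = w ^ (k mod n)"
proof -
  assume "w ^ n = 1"
  have "w ^ k = (w ^ n) ^ (k div n) * w ^ (k mod n)"
    by (metis div_mult_mod_eq power_add power_mult mult.commute)
  then show ?thesis using \<open>w ^ n = 1\<close> by simp
qed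

definition qint :: "'k::field \<Rightarrow> nat \<Rightarrow> 'k" where "qint w i = (\<Sum>j<i. w ^ j)"

lemma qint_Suc: "qint w (Suc i) = 1 + w * qint w i"
  unfolding qint_def sum.lessThan_Suc_shift by (simp add: sum_distrib_left)

lemma qint_geom: "(w - 1) * qint w i = w ^ i - (1::'k::field)"
proof (induction i)
  case 0 then show ?case by (simp add: qint_def)
next
  case (Suc i) then show ?case by (simp add: qint_Suc algebra_simps)
qed

lemma acoef_Suc: "acoef w (Suc j) = acoef w j * (w - 1) * w ^ (Suc j)"
proof -
  have "Suc j * (Suc j + 1) div 2 = j * (j + 1) div 2 + Suc j"
  proof -
    have "Suc j * (Suc j + 1) = j * (j + 1) + 2 * Suc j" by simp
    then show ?thesis by simp
  qed
  then show ?thesis by (simp add: acoef_def power_add mult_ac)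
qed

lemma Hb_eq: "a < n \<Longrightarrow> Hb n a b c d = (if c = a \<and> d = b \<and> b < n then 1 else 0)"
  by (simp add: Hb_def)

lemma Hb_nonzero_bounds: "Hb n a b c d \<noteq> 0 \<Longrightarrow> c < n \<and> d < n"
  by (auto simp: Hb_def split: if_splits)

lemma Hb_mod: "Hb n (a mod n) = Hb n a"
  by (simp add: Hb_def fun_eq_iff)

lemma Hmul_out_of_range: "\<not> (c < n \<and> d < n) \<Longrightarrow> Hmul n w f h c d = 0"
  unfolding Hmul_def by auto

lemma Hmul_basis:
  assumes "a < n" "b < n" "a' < n" "b' < n"
  shows "Hmul n w (Hb n a b) (Hb n a' b') c d = w^(b*a') * Hb n (a+a') (b+b') c d"
proof -
  have "Hmul n w (Hb n a b) (Hb n a' b') c d = (if c < n \<and> d < n then w^(b*a') * Hb n (a+a') (b+b') c d else 0)"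
    using assms by (simp add: Hmul_def Hb_eq delta_simps cong: if_cong)
  then show ?thesis using Hb_nonzero_bounds[of n "a+a'" "b+b'" c d] by auto
qed

lemma sum_Hb_expand: "c < n \<Longrightarrow> d < n \<Longrightarrow> (\<Sum>p<n. \<Sum>q<n. F p q * Hb n p q c d) = F c d"
  by (simp add: Hb_eq delta_simps cong: if_cong)

lemma Hpow_Suc: "Hpow n w f (Suc k) = Hmul n w f (Hpow n w f k)"
  by (simp add: Hpow_def)

lemma Hpow_0: "Hpow n w f 0 = Hb n 0 0"
  by (simp add: Hpow_def Hone_def)

lemma Hb_degree_ge: "n \<le> b \<Longrightarrow> Hb n a b = (\<lambda>c d. 0)"
  by (auto simp: Hb_def fun_eq_iff)

lemma Hmul_zero_right: "Hmul n w K (\<lambda>c d. 0) = (\<lambda>c d. 0)"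
  by (simp add: Hmul_def fun_eq_iff)

lemma Hpow_Hx: assumes "2 \<le> n" shows "Hpow n w (Hx n) i = Hb n 0 i"
proof (induction i)
  case 0 then show ?case by (simp add: Hpow_0)
next
  case (Suc i)
  show ?case
  proof (cases "i < n")
    case True
    then show ?thesis using assms unfolding Hpow_Suc Suc.IH
      by (simp add: Hx_def fun_eq_iff Hmul_basis)
  next
    case False
    then show ?thesis by (simp add: Hpow_Suc Suc Hb_degree_ge Hmul_zero_right)
  qed
qed

lemma Hpow_Hg: assumes "2 \<le> n" shows "Hpow n w (Hg n) k = Hb n k 0"
proof (induction k)
  case 0 then show ?case by (simp add: Hpow_0)
next
  case (Suc k)
  have "Hmul n w (Hb n 1 0) (Hb n (k mod n) 0) = Hb n (1 + k mod n) 0"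
    using assms by (simp add: fun_eq_iff Hmul_basis)
  also have "\<dots> = Hb n (Suc k) 0"
    by (metis Hb_mod mod_Suc_eq plus_1_eq_Suc)
  finally show ?case unfolding Hpow_Suc Suc.IH by (simp add: Hg_def Hb_mod)
qed

lemma Hpow_Hginv: assumes "2 \<le> n" shows "Hpow n w (Hginv n w) j = Hb n ((n - 1) * j) 0"
proof (induction j)
  case 0 then show ?case by (simp add: Hpow_0)
next
  case (Suc j)
  have "Hmul n w (Hb n (n-1) 0) (Hb n (((n - 1) * j) mod n) 0) = Hb n (n - 1 + ((n - 1) * j) mod n) 0"
    using assms by (simp add: fun_eq_iff Hmul_basis)
  also have "\<dots> = Hb n ((n - 1) * Suc j) 0"
    by (metis Hb_mod mod_add_right_eq mult_Suc_right)
  moreover have "Hginv n w = Hb n (n-1) 0" using assms by (simp add: Hginv_def Hpow_Hg)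
  ultimately show ?case unfolding Hpow_Suc Suc.IH by (simp add: Hb_mod)
qed

lemma Heps_Hb: "Heps n (Hb n a b) = (if b = 0 \<and> 0 < n then 1 else 0)"
  by (auto simp: Heps_def Hb_def delta_simps)

lemma HHt_Hb: "a < n \<Longrightarrow> b < n \<Longrightarrow> a' < n \<Longrightarrow> b' < n \<Longrightarrow>
  HHt n (Hb n a b) (Hb n a' b') c d c' d' = (if c = a \<and> d = b \<and> c' = a' \<and> d' = b' then 1 else 0)"
  by (auto simp: HHt_def Hb_eq)

lemma Hmul_basis_unit_right: "a < n \<Longrightarrow> b < n \<Longrightarrow> Hmul n w (Hb n a b) (Hb n 0 0) = Hb n a b"
  by (auto simp: fun_eq_iff Hmul_basis)

lemma Hmul_basis_unit_left: "a < n \<Longrightarrow> b < n \<Longrightarrow> Hmul n w (Hb n 0 0) (Hb n a b) = Hb n a b"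
  by (auto simp: fun_eq_iff Hmul_basis)

lemma sum4_single_support_0: "0 < (n::nat) \<Longrightarrow> (\<Sum>p<n. \<Sum>q<n. \<Sum>p'<n. \<Sum>q'<n. (if p = 0 \<and> q = 0 \<and> p' = 0 \<and> q' = 0 then F p q p' q' else 0)) = F 0 0 0 0"
  by (subst sum4_single_support[where a=0 and b=0 and c=0 and d=0]) auto

lemma HHt_unit_basis: "0 < n \<Longrightarrow> p < n \<Longrightarrow> q < n \<Longrightarrow> p' < n \<Longrightarrow> q' < n \<Longrightarrow> HHt n (Hb n 0 0) (Hb n 0 0) p q p' q' = (if p = 0 \<and> q = 0 \<and> p' = 0 \<and> q' = 0 then 1 else 0)"
  by (simp add: HHt_Hb)

lemma HHmul_unit_right: assumes "0 < n"
  shows "HHmul n w X (HHt n (Hb n 0 0) (Hb n 0 0)) c d c' d' = (if c < n \<and> d < n \<and> c' < n \<and> d' < n then X c d c' d' else 0)"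
proof -
  have "HHmul n w X (HHt n (Hb n 0 0) (Hb n 0 0)) c d c' d' =
     (\<Sum>a<n. \<Sum>b<n. \<Sum>a'<n. \<Sum>b'<n. X a b a' b' * HHt n (Hb n a b) (Hb n a' b') c d c' d')"
  proof -
    have "HHmul n w X (HHt n (Hb n 0 0) (Hb n 0 0)) c d c' d' =
     (\<Sum>a<n. \<Sum>b<n. \<Sum>a'<n. \<Sum>b'<n. \<Sum>p<n. \<Sum>q<n. \<Sum>p'<n. \<Sum>q'<n.
       (if p = 0 \<and> q = 0 \<and> p' = 0 \<and> q' = 0 then X a b a' b' * HHt n (Hmul n w (Hb n a b) (Hb n p q)) (Hmul n w (Hb n a' b') (Hb n p' q')) c d c' d' else 0))"
      unfolding HHmul_def using assms by (intro sum.cong refl) (simp add: HHt_unit_basis)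
    also have "\<dots> = (\<Sum>a<n. \<Sum>b<n. \<Sum>a'<n. \<Sum>b'<n. X a b a' b' * HHt n (Hb n a b) (Hb n a' b') c d c' d')"
      using assms
      by (intro sum.cong refl) (simp only: sum4_single_support_0, simp add: Hmul_basis_unit_right)
    finally show ?thesis .
  qed
  also have "\<dots> = (\<Sum>a<n. \<Sum>b<n. \<Sum>a'<n. \<Sum>b'<n. (if a = c \<and> b = d \<and> a' = c' \<and> b' = d' then X a b a' b' else 0))"
    by (intro sum.cong refl) (auto simp: HHt_Hb)
  also have "\<dots> = (if c < n \<and> d < n \<and> c' < n \<and> d' < n then X c d c' d' else 0)"
    by (auto simp: if_conj_zero sum_if_zero)
  finally show ?thesis .
qed

lemma HHmul_unit_left: assumes "0 < n"
  shows "HHmul n w (HHt n (Hb n 0 0) (Hb n 0 0)) X c d c' d' = (if c < n \<and> d < n \<and> c' < n \<and> d' < n then X c d c' d' else 0)"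
proof -
  have "HHmul n w (HHt n (Hb n 0 0) (Hb n 0 0)) X c d c' d' =
     (\<Sum>a<n. \<Sum>b<n. \<Sum>a'<n. \<Sum>b'<n. \<Sum>p<n. \<Sum>q<n. \<Sum>p'<n. \<Sum>q'<n.
       (if a = 0 \<and> b = 0 \<and> a' = 0 \<and> b' = 0 then X p q p' q' * HHt n (Hmul n w (Hb n a b) (Hb n p q)) (Hmul n w (Hb n a' b') (Hb n p' q')) c d c' d' else 0))"
    unfolding HHmul_def using assms by (intro sum.cong refl) (simp add: HHt_unit_basis)
  also have "\<dots> = (\<Sum>p<n. \<Sum>q<n. \<Sum>p'<n. \<Sum>q'<n. X p q p' q' * HHt n (Hb n p q) (Hb n p' q') c d c' d')"
    using assms
    by (simp add: delta_simps) (intro sum.cong refl, simp add: Hmul_basis_unit_left)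
  also have "\<dots> = (\<Sum>a<n. \<Sum>b<n. \<Sum>a'<n. \<Sum>b'<n. (if a = c \<and> b = d \<and> a' = c' \<and> b' = d' then X a b a' b' else 0))"
    by (intro sum.cong refl) (auto simp: HHt_Hb)
  also have "\<dots> = (if c < n \<and> d < n \<and> c' < n \<and> d' < n then X c d c' d' else 0)"
    by (auto simp: if_conj_zero sum_if_zero)
  finally show ?thesis .
qed

lemma HHpow_0: "HHpow n w X 0 = HHt n (Hb n 0 0) (Hb n 0 0)" by (simp add: HHpow_def Hone_def)

lemma HHpow_Suc: "HHpow n w X (Suc k) = HHmul n w X (HHpow n w X k)" by (simp add: HHpow_def)

lemma Delta_Hb: "a < n \<Longrightarrow> b < n \<Longrightarrow> Delta n w (Hb n a b) c d c' d' = HHmul n w (HHpow n w (Dg n) a) (HHpow n w (Dx n) b) c d c' d'"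
  by (simp add: Delta_def Hb_eq delta_simps cong: if_cong)

lemma Ae_eq: "Ae n i k = (if k < n \<and> k = i then 1 else 0)" by (simp add: Ae_def)

lemma Amul_scal_right: "Amul n w K (\<lambda>p. s * F p) k = s * Amul n w K F k"
  unfolding Amul_def by (simp add: sum_distrib_left mult_ac)

lemma Amul_scal_left: "Amul n w (\<lambda>p. s * F p) K k = s * Amul n w F K k"
  unfolding Amul_def by (simp add: sum_distrib_left mult_ac)

lemma Amul_cong: "(\<And>i. i < n \<Longrightarrow> m i = mm i) \<Longrightarrow> (\<And>i. i < n \<Longrightarrow> m' i = mm' i) \<Longrightarrow> Amul n w m m' k = Amul n w mm mm' k"
  unfolding Amul_def by (intro if_cong refl sum.cong) auto

lemma Amul_out_of_range: "\<not> k < n \<Longrightarrow> Amul n w m m' k = 0"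
  unfolding Amul_def by auto

lemma Amul_basis: "i < n \<Longrightarrow> j < n \<Longrightarrow> Amul n w (Ae n i) (Ae n j) k = (if i + j < n then Ae n (i+j) k else w * Ae n (i+j-n) k)"
  by (auto simp: Amul_def Ae_eq delta_simps cong: if_cong)

lemma Amul_unit_left: "0 < n \<Longrightarrow> Amul n w (Ae n 0) m k = (if k < n then m k else 0)"
  by (auto simp: Amul_def Ae_eq delta_simps cong: if_cong)

lemma Amul_unit_right: "0 < n \<Longrightarrow> Amul n w m (Ae n 0) k = (if k < n then m k else 0)"
  by (auto simp: Amul_def Ae_eq delta_simps cong: if_cong)

lemma Apow_Suc: "Apow n w m (Suc k) = Amul n w m (Apow n w m k)" by (simp add: Apow_def)

lemma Apow_Au: assumes "2 \<le> n" "j < n" shows "Apow n w (Au n) j = Ae n j"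
  using assms(2)
proof (induction j)
  case 0 then show ?case by (simp add: Apow_def Aone_def)
next
  case (Suc j)
  then show ?case using assms(1) unfolding Apow_Suc Suc.IH[OF Suc_lessD[OF Suc.prems]]
    by (simp add: Au_def fun_eq_iff Amul_basis)
qed

lemma Apow_Au_n: assumes "2 \<le> n" shows "Apow n w (Au n) n = (\<lambda>k. w * Ae n 0 k)"
proof -
  obtain j where j: "n = Suc j" using assms by (cases n) auto
  have "j < n" using j by simp
  have "Apow n w (Au n) n = Amul n w (Au n) (Apow n w (Au n) j)" using j Apow_Suc by simp
  also have "\<dots> = Amul n w (Ae n 1) (Ae n j)"
    by (metis Apow_Au[OF assms \<open>j < n\<close>] Au_def)
  finally show ?thesis using assms j
    by (simp add: fun_eq_iff Amul_basis)
qed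

lemma act_Ae: "act n act0 h (Ae n i) k = (if k < n \<and> i < n then (\<Sum>a<n. \<Sum>b<n. h a b * act0 a b i k) else 0)"
  by (auto simp: act_def Ae_eq delta_simps cong: if_cong)

lemma act_out_of_range: "\<not> k < n \<Longrightarrow> act n act0 h m k = 0" by (simp add: act_def)

lemma act_expand_Ae: "act n act0 h m k = (\<Sum>i<n. m i * act n act0 h (Ae n i) k)"
proof (cases "k < n")
  case True
  have "act n act0 h m k = (\<Sum>a<n. \<Sum>b<n. \<Sum>i<n. h a b * m i * act0 a b i k)"
    using True by (simp add: act_def)
  also have "\<dots> = (\<Sum>i<n. \<Sum>a<n. \<Sum>b<n. m i * (h a b * act0 a b i k))"
    by (subst sum_outer_to_inner3[where I="{..<n}", symmetric]) (simp add: mult_ac)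
  also have "\<dots> = (\<Sum>i<n. m i * act n act0 h (Ae n i) k)"
    using True by (simp add: act_Ae sum_distrib_left)
  finally show ?thesis .
qed (simp add: act_out_of_range)

lemma act_Hb: "a < n \<Longrightarrow> act n act0 (Hb n a b) m k = (if k < n \<and> b < n then (\<Sum>i<n. m i * act0 a b i k) else 0)"
  by (auto simp: act_def Hb_eq delta_simps cong: if_cong)

lemma act_expand_Hb: "act n act0 h m k = (\<Sum>a<n. \<Sum>b<n. h a b * act n act0 (Hb n a b) m k)"
proof -
  have "(\<Sum>a<n. \<Sum>b<n. h a b * act n act0 (Hb n a b) m k) = (if k < n then (\<Sum>a<n. \<Sum>b<n. \<Sum>i<n. h a b * m i * act0 a b i k) else 0)"
    by (auto simp: act_Hb sum_distrib_left mult_ac intro!: sum.cong)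
  then show ?thesis by (simp add: act_def)
qed

lemma act_scal: "act n act0 h (\<lambda>i. s * F i) k = s * act n act0 h F k"
  unfolding act_def by (simp add: sum_distrib_left mult_ac)

text \<open>
  The basis element \<open>g\<^sup>a x\<^sup>b \<otimes> u\<^sup>i\<close> of \<open>H \<otimes> A\<close> is indexed by \<open>(a, b, i)\<close>;
  the product of two basis elements is \<open>HA_cocycle\<close> times the basis element \<open>HA_shift\<close>.
\<close>

definition HA_index :: "nat \<Rightarrow> (nat \<times> nat \<times> nat) set"
  where "HA_index n = {..<n} \<times> {..<n} \<times> {..<n}"

fun HA_shift :: "nat \<Rightarrow> nat \<times> nat \<times> nat \<Rightarrow> nat \<times> nat \<times> nat \<Rightarrow> nat \<times> nat \<times> nat" where
  "HA_shift n (a, b, i) (a', b', i') = ((a + a') mod n, b + b', (i + i') mod n)"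

fun HA_cocycle :: "nat \<Rightarrow> 'k::field \<Rightarrow> nat \<times> nat \<times> nat \<Rightarrow> nat \<times> nat \<times> nat \<Rightarrow> 'k" where
  "HA_cocycle n w (a, b, i) (a', b', i') =
    (if b + b' < n then w ^ (b * a') * (if i + i' < n then 1 else w) else 0)"

lemma mod_less_double: "(x::nat) < 2 * n \<Longrightarrow> x mod n = (if x < n then x else x - n)"
  by (simp add: mod_if le_mod_geq)

lemma HAt_basis:
  assumes "a < n" "b < n" "i < n" "a' < n" "b' < n" "i' < n"
  shows "HAt n (Hmul n w (Hb n a b) (Hb n a' b')) (Amul n w (Ae n i) (Ae n i')) c d k =
    HA_cocycle n w (a, b, i) (a', b', i') *
    (if HA_shift n (a, b, i) (a', b', i') = (c, d, k) then 1 else 0)"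
proof -
  have im: "(i + i') mod n = (if i + i' < n then i + i' else i + i' - n)"
    using assms by (intro mod_less_double) auto
  have "(a + a') mod n < n" using assms by simp
  then show ?thesis using assms
    by (simp only: HAt_def Hmul_basis[OF assms(1,2,4,5)] Amul_basis[OF assms(3,6)] im)
      (auto simp: Hb_def Ae_eq im)
qed

lemma HAmul_as_tconv:
  "HAmul n w T S c d k = tconv (HA_index n) (HA_shift n) (HA_cocycle n w)
     (\<lambda>(a, b, i). T a b i) (\<lambda>(a, b, i). S a b i) (c, d, k)"
  unfolding HAmul_def tconv_def HA_index_def sum.cartesian_product'
  by (intro sum.cong refl) (auto simp: HAt_basis mult.assoc)

lemma HA_shift_closed:
  "0 < n \<Longrightarrow> \<forall>s\<in>HA_index n. \<forall>t\<in>HA_index n. HA_cocycle n w s t \<noteq> 0 \<longrightarrow> HA_shift n s t \<in> HA_index n"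
  by (auto simp: HA_index_def split: if_splits)

lemma HA_shift_assoc: "HA_shift n (HA_shift n s t) r = HA_shift n s (HA_shift n t r)"
  by (cases s; cases t; cases r) (simp add: mod_add_left_eq mod_add_right_eq add.assoc)

lemma wrap_factor_assoc:
  fixes i i' i'' n :: nat
  assumes "i < n" "i' < n" "i'' < n"
  shows "(if i + i' < n then 1 else w) * (if (i + i') mod n + i'' < n then 1 else w) =
    (if i' + i'' < n then 1 else w) * (if i + (i' + i'') mod n < n then 1 else (w::'k::comm_semiring_1))"
proof -
  have "(i + i') mod n = (if i + i' < n then i + i' else i + i' - n)"
    and "(i' + i'') mod n = (if i' + i'' < n then i' + i'' else i' + i'' - n)"
    using assms by (intro mod_less_double; simp)+
  then show ?thesis using assms by auto
qed

lemma HA_cocycle_identity: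
  fixes w :: "'k::field"
  assumes "w ^ n = 1" and "s \<in> HA_index n" "t \<in> HA_index n" "r \<in> HA_index n"
  shows "HA_cocycle n w s t * HA_cocycle n w (HA_shift n s t) r =
    HA_cocycle n w t r * HA_cocycle n w s (HA_shift n t r)"
proof -
  obtain a b i a' b' i' a'' b'' i'' where str: "s = (a, b, i)" "t = (a', b', i')" "r = (a'', b'', i'')"
    by (cases s; cases t; cases r)
  have "w ^ (b * ((a' + a'') mod n)) = w ^ (b * (a' + a''))"
    by (metis mod_mult_right_eq power_mod_order assms(1))
  then have H: "w ^ (b * a') * w ^ ((b + b') * a'') = w ^ (b' * a'') * w ^ (b * ((a' + a'') mod n))"
    by (simp add: power_add[symmetric] algebra_simps)
  have A: "(if i + i' < n then 1 else w) * (if (i + i') mod n + i'' < n then 1 else w) =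
    (if i' + i'' < n then 1 else w) * (if i + (i' + i'') mod n < n then 1 else w)"
    using assms(2-4) str by (intro wrap_factor_assoc) (auto simp: HA_index_def)
  show ?thesis
  proof (cases "b + b' + b'' < n")
    case True
    then have "HA_cocycle n w s t * HA_cocycle n w (HA_shift n s t) r =
      (w ^ (b * a') * w ^ ((b + b') * a'')) *
      ((if i + i' < n then 1 else w) * (if (i + i') mod n + i'' < n then 1 else w))"
      unfolding str by (simp add: mult_ac)
    also have "\<dots> = HA_cocycle n w t r * HA_cocycle n w s (HA_shift n t r)"
      unfolding H A str using True by (simp add: mult_ac)
    finally show ?thesis .
  qed (auto simp: str add.assoc)
qed

lemma HAmul_assoc:
  fixes w :: "'k::field"
  assumes "w ^ n = 1" "0 < n"
  shows "HAmul n w (HAmul n w T S) R c d k = HAmul n w T (HAmul n w S R) c d k"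
proof -
  have "(\<lambda>(a, b, i). HAmul n w T S a b i) = tconv (HA_index n) (HA_shift n) (HA_cocycle n w)
      (\<lambda>(a, b, i). T a b i) (\<lambda>(a, b, i). S a b i)"
    and "(\<lambda>(a, b, i). HAmul n w S R a b i) = tconv (HA_index n) (HA_shift n) (HA_cocycle n w)
      (\<lambda>(a, b, i). S a b i) (\<lambda>(a, b, i). R a b i)"
    by (auto simp: HAmul_as_tconv)
  then show ?thesis
    unfolding HAmul_as_tconv[of n w _ _ c d k]
    by (simp only:) (rule tconv_assoc[OF _ HA_shift_closed[OF assms(2)] HA_cocycle_identity[OF assms(1)]
        HA_shift_assoc], simp add: HA_index_def)
qed

lemma HAmul_sum_left: "HAmul n w (\<lambda>a b i. \<Sum>j\<in>J. F j a b i) S c d k = (\<Sum>j\<in>J. HAmul n w (F j) S c d k)"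
proof -
  have "(\<lambda>(a,b,i). \<Sum>j\<in>J. F j a b i) = (\<lambda>s. \<Sum>j\<in>J. (\<lambda>(a,b,i). F j a b i) s)"
    by auto
  then show ?thesis unfolding HAmul_as_tconv by (simp add: tconv_sum_left)
qed

lemma HAmul_sum_right: "HAmul n w T (\<lambda>a b i. \<Sum>j\<in>J. F j a b i) c d k = (\<Sum>j\<in>J. HAmul n w T (F j) c d k)"
proof -
  have "(\<lambda>(a,b,i). \<Sum>j\<in>J. F j a b i) = (\<lambda>s. \<Sum>j\<in>J. (\<lambda>(a,b,i). F j a b i) s)"
    by auto
  then show ?thesis unfolding HAmul_as_tconv by (simp add: tconv_sum_right)
qed

lemma HAmul_scal_left: "HAmul n w (\<lambda>a b i. s * F a b i) S c d k = s * HAmul n w F S c d k"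
proof -
  have "(\<lambda>(a,b,i). s * F a b i) = (\<lambda>x. s * (\<lambda>(a,b,i). F a b i) x)" by auto
  then show ?thesis unfolding HAmul_as_tconv by (simp add: tconv_scal_left)
qed

lemma HAmul_scal_right: "HAmul n w T (\<lambda>a b i. s * F a b i) c d k = s * HAmul n w T F c d k"
proof -
  have "(\<lambda>(a,b,i). s * F a b i) = (\<lambda>x. s * (\<lambda>(a,b,i). F a b i) x)" by auto
  then show ?thesis unfolding HAmul_as_tconv by (simp add: tconv_scal_right)
qed

lemma HAmul_add_left: "HAmul n w (\<lambda>a b i. F a b i + G a b i) S c d k = HAmul n w F S c d k + HAmul n w G S c d k"
proof -
  have "(\<lambda>(a,b,i). F a b i + G a b i) = (\<lambda>x. (\<lambda>(a,b,i). F a b i) x + (\<lambda>(a,b,i). G a b i) x)"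
    by auto
  then show ?thesis unfolding HAmul_as_tconv by (simp add: tconv_add_left)
qed

lemma HAmul_add_right: "HAmul n w T (\<lambda>a b i. F a b i + G a b i) c d k = HAmul n w T F c d k + HAmul n w T G c d k"
proof -
  have "(\<lambda>(a,b,i). F a b i + G a b i) = (\<lambda>x. (\<lambda>(a,b,i). F a b i) x + (\<lambda>(a,b,i). G a b i) x)"
    by auto
  then show ?thesis unfolding HAmul_as_tconv by (simp add: tconv_add_right)
qed

lemma HAmul_cong: "(\<And>a b i. a < n \<Longrightarrow> b < n \<Longrightarrow> i < n \<Longrightarrow> T a b i = T' a b i) \<Longrightarrow> (\<And>a b i. a < n \<Longrightarrow> b < n \<Longrightarrow> i < n \<Longrightarrow> S a b i = S' a b i)
  \<Longrightarrow> HAmul n w T S c d k = HAmul n w T' S' c d k"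
  unfolding HAmul_def by (intro sum.cong refl) auto

lemma HAmul_out_of_range: "\<not> (c < n \<and> d < n \<and> k < n) \<Longrightarrow> HAmul n w T S c d k = 0"
  unfolding HAmul_def by (auto simp: HAt_def)

lemma Hmul_expand_basis: "Hmul n w f h c d = (\<Sum>a<n. \<Sum>b<n. \<Sum>a'<n. \<Sum>b'<n. f a b * h a' b' * Hmul n w (Hb n a b) (Hb n a' b') c d)"
proof (cases "c < n \<and> d < n")
  case True
  have "(\<Sum>a<n. \<Sum>b<n. \<Sum>a'<n. \<Sum>b'<n. f a b * h a' b' * Hmul n w (Hb n a b) (Hb n a' b') c d)
     = (\<Sum>a<n. \<Sum>b<n. \<Sum>a'<n. \<Sum>b'<n. f a b * h a' b' * w ^ (b * a') * Hb n (a + a') (b + b') c d)"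
    by (intro sum.cong refl) (simp add: Hmul_basis mult.assoc)
  then show ?thesis using True by (simp add: Hmul_def)
qed (simp add: Hmul_out_of_range)

lemma Amul_expand_basis: "Amul n w m m' k = (\<Sum>i<n. \<Sum>j<n. m i * m' j * Amul n w (Ae n i) (Ae n j) k)"
proof (cases "k < n")
  case True
  have "(\<Sum>i<n. \<Sum>j<n. m i * m' j * Amul n w (Ae n i) (Ae n j) k)
     = (\<Sum>i<n. \<Sum>j<n. m i * m' j * (if i + j < n then (if k = i + j then 1 else 0) else (if k = i + j - n then w else 0)))"
    using True by (intro sum.cong refl) (auto simp: Amul_basis Ae_eq)
  then show ?thesis using True by (simp add: Amul_def)
qed (simp add: Amul_out_of_range)

lemma HAmul_tensor: "HAmul n w (HAt n f m) (HAt n f' m') c d k = HAt n (Hmul n w f f') (Amul n w m m') c d k"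
proof (cases "c < n \<and> d < n \<and> k < n")
  case True
  have "HAmul n w (HAt n f m) (HAt n f' m') c d k =
    (\<Sum>a<n. \<Sum>b<n. \<Sum>i<n. \<Sum>a'<n. \<Sum>b'<n. \<Sum>i'<n. (f a b * f' a' b' * Hmul n w (Hb n a b) (Hb n a' b') c d) * (m i * m' i' * Amul n w (Ae n i) (Ae n i') k))"
    unfolding HAmul_def using True by (intro sum.cong refl) (simp add: HAt_def mult_ac)
  also have "\<dots> = (\<Sum>a<n. \<Sum>b<n. \<Sum>a'<n. \<Sum>b'<n. \<Sum>i<n. \<Sum>i'<n. (f a b * f' a' b' * Hmul n w (Hb n a b) (Hb n a' b') c d) * (m i * m' i' * Amul n w (Ae n i) (Ae n i') k))"
    by (rule sum.cong[OF refl], rule sum.cong[OF refl], rule sum_outer_to_inner3)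
  also have "\<dots> = Hmul n w f f' c d * Amul n w m m' k"
    unfolding Hmul_expand_basis[of n w f f' c d] Amul_expand_basis[of n w m m' k]
    by (simp only: sum_distrib_right) (simp only: sum_distrib_left)
  finally show ?thesis using True by (simp add: HAt_def)
qed (auto simp: HAmul_out_of_range HAt_def)

abbreviation "HAone n \<equiv> HAt n (Hb n 0 0) (Ae n 0)"

lemma HAmul_one_left: "0 < n \<Longrightarrow> HAmul n w (HAone n) T c d k = (if c < n \<and> d < n \<and> k < n then T c d k else 0)"
  unfolding HAmul_as_tconv
  by (subst tconv_unit_left[where e="(0,0,0)"]) (auto simp: HA_index_def HAt_def Hb_def Ae_eq split: if_splits)

lemma HAmul_one_right: "0 < n \<Longrightarrow> HAmul n w T (HAone n) c d k = (if c < n \<and> d < n \<and> k < n then T c d k else 0)"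
  unfolding HAmul_as_tconv
  by (subst tconv_unit_right[where e="(0,0,0)"]) (auto simp: HA_index_def HAt_def Hb_def Ae_eq split: if_splits)

definition HA_supported :: "nat \<Rightarrow> (nat \<Rightarrow> nat \<Rightarrow> nat \<Rightarrow> 'k::zero) \<Rightarrow> bool" where
  "HA_supported n T \<longleftrightarrow> (\<forall>c d k. \<not> (c < n \<and> d < n \<and> k < n) \<longrightarrow> T c d k = 0)"

lemma HA_supported_HAmul: "HA_supported n (HAmul n w T S)" by (simp add: HA_supported_def HAmul_out_of_range)

lemma HA_supported_HAt: "HA_supported n (HAt n f m)" by (simp add: HA_supported_def HAt_def)

lemma HAmul_one_left_fun: "0 < n \<Longrightarrow> HA_supported n T \<Longrightarrow> HAmul n w (HAone n) T = T"
  by (auto simp: fun_eq_iff HAmul_one_left HA_supported_def)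

lemma HAmul_one_right_fun: "0 < n \<Longrightarrow> HA_supported n T \<Longrightarrow> HAmul n w T (HAone n) = T"
  by (auto simp: fun_eq_iff HAmul_one_right HA_supported_def)

lemma HAmul_scal_left_fun: "HAmul n w (\<lambda>a b i. s * F a b i) S = (\<lambda>c d k. s * HAmul n w F S c d k)"
  by (simp add: fun_eq_iff HAmul_scal_left)

lemma HAmul_scal_right_fun: "HAmul n w T (\<lambda>a b i. s * F a b i) = (\<lambda>c d k. s * HAmul n w T F c d k)"
  by (simp add: fun_eq_iff HAmul_scal_right)

lemma HAmul_add_left_fun: "HAmul n w (\<lambda>a b i. F a b i + G a b i) S = (\<lambda>c d k. HAmul n w F S c d k + HAmul n w G S c d k)"
  by (simp add: fun_eq_iff HAmul_add_left)

lemma HAmul_add_right_fun: "HAmul n w T (\<lambda>a b i. F a b i + G a b i) = (\<lambda>c d k. HAmul n w T F c d k + HAmul n w T G c d k)"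
  by (simp add: fun_eq_iff HAmul_add_right)

lemma HAmul_tensor_fun: "HAmul n w (HAt n f m) (HAt n f' m') = HAt n (Hmul n w f f') (Amul n w m m')"
  by (simp add: fun_eq_iff HAmul_tensor)

lemma HAt_cong: "(\<And>c d. c < n \<Longrightarrow> d < n \<Longrightarrow> f c d = f' c d) \<Longrightarrow> (\<And>k. k < n \<Longrightarrow> m k = m' k) \<Longrightarrow> HAt n f m = HAt n f' m'"
  by (auto simp: fun_eq_iff HAt_def)

lemma HAt_scal_left: "HAt n (\<lambda>c d. s * f c d) m = (\<lambda>a b i. s * HAt n f m a b i)"
  by (auto simp: fun_eq_iff HAt_def)

lemma HAt_scal_right: "HAt n f (\<lambda>k. s * m k) = (\<lambda>a b i. s * HAt n f m a b i)"
  by (auto simp: fun_eq_iff HAt_def)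

lemma HApow_0: "HApow n w T 0 = HAone n" by (simp add: HApow_def Hone_def Aone_def)

lemma HApow_Suc: "HApow n w T (Suc i) = HAmul n w T (HApow n w T i)" by (simp add: HApow_def)

lemma HA_supported_HApow: "HA_supported n (HApow n w T i)"
  by (cases i) (simp_all add: HApow_0 HApow_Suc HA_supported_HAt HA_supported_HAmul)

lemma rho_Ae: "i < n \<Longrightarrow> rho n w (Ae n i) = HApow n w (rho_u n w) i"
  by (auto simp: fun_eq_iff rho_def Ae_eq delta_simps cong: if_cong)

lemma HAmul_unfold: "HAmul n w T S = (\<lambda>c d k. \<Sum>a<n. \<Sum>b<n. \<Sum>i<n. \<Sum>a'<n. \<Sum>b'<n. \<Sum>i'<n.
       T a b i * S a' b' i' * HAt n (Hmul n w (Hb n a b) (Hb n a' b')) (Amul n w (Ae n i) (Ae n i')) c d k)"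
  by (simp add: HAmul_def fun_eq_iff)

lemma HAt_add: "HAt n F (\<lambda>k. A k + B k) = (\<lambda>a b i. HAt n F A a b i + HAt n F B a b i)"
  by (auto simp: fun_eq_iff HAt_def distrib_left)

lemma HAmul_zero_right: "HAmul n w T (\<lambda>a b i. 0) = (\<lambda>a b i. 0)"
  by (simp add: fun_eq_iff HAmul_def)

lemma HHmul_unfold: "HHmul n w X Y = (\<lambda>c d c' d'. \<Sum>a<n. \<Sum>b<n. \<Sum>a'<n. \<Sum>b'<n. \<Sum>p<n. \<Sum>q<n. \<Sum>p'<n. \<Sum>q'<n.
       X a b a' b' * Y p q p' q' *
       HHt n (Hmul n w (Hb n a b) (Hb n p q)) (Hmul n w (Hb n a' b') (Hb n p' q')) c d c' d')"
  by (simp add: HHmul_def fun_eq_iff)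

lemma HAt_expand_Hb: "HAt n f m = (\<lambda>a b i. \<Sum>p<n. \<Sum>q<n. f p q * HAt n (Hb n p q) m a b i)"
proof (intro ext)
  fix a b i
  show "HAt n f m a b i = (\<Sum>p<n. \<Sum>q<n. f p q * HAt n (Hb n p q) m a b i)"
  proof (cases "a < n \<and> b < n \<and> i < n")
    case True
    then have "(\<Sum>p<n. \<Sum>q<n. f p q * HAt n (Hb n p q) m a b i) = (\<Sum>p<n. \<Sum>q<n. f p q * Hb n p q a b) * m i"
      by (simp add: HAt_def sum_distrib_right mult.assoc)
    then show ?thesis using True by (simp add: sum_Hb_expand HAt_def)
  qed (auto simp: HAt_def)
qed

lemma rho_sum: "rho n w (\<lambda>i. \<Sum>j\<in>J. F j i) = (\<lambda>a b k. \<Sum>j\<in>J. rho n w (F j) a b k)"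
  unfolding rho_def by (simp add: fun_eq_iff sum_distrib_right sum.swap[where B=J])

lemma rho_scal: "rho n w (\<lambda>i. s * F i) = (\<lambda>a b k. s * rho n w F a b k)"
  unfolding rho_def by (simp add: fun_eq_iff sum_distrib_left mult.assoc)

lemma rho_cong: "(\<And>i. i < n \<Longrightarrow> m i = m' i) \<Longrightarrow> rho n w m = rho n w m'"
  unfolding rho_def by (intro ext sum.cong refl) auto

locale taft_action =
  fixes n :: nat and w :: "'k::field" and act0 :: "nat \<Rightarrow> nat \<Rightarrow> nat \<Rightarrow> 'k Ael"
  assumes n_ge_2: "2 \<le> n" and primitive: "primitive_root n w" and module_algebra: "is_module_algebra n w act0"
    and g_acts_on_u: "act n act0 (Hg n) (Au n) = (\<lambda>k. w * Au n k)" and x_acts_on_u: "act n act0 (Hx n) (Au n) = Aone n"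
begin

abbreviation "ACT \<equiv> act n act0"
abbreviation "HM \<equiv> HAmul n w"
abbreviation "U \<equiv> rho_u n w"
abbreviation "V \<equiv> HApow n w (rho_u n w)"
abbreviation "g1 \<equiv> HAt n (Hb n 1 0) (Ae n 0)"
abbreviation "x1 \<equiv> HAt n (Hb n 0 1) (Ae n 0)"
abbreviation "gH \<equiv> Hb n 1 0"
abbreviation "xH \<equiv> Hb n 0 1"
abbreviation "Ae0 \<equiv> Ae n 0"

lemma n_pos: "0 < n" using n_ge_2 by simp

lemma w_pow_n: "w ^ n = 1" using primitive by (simp add: primitive_root_def)

lemma w_nonzero: "w \<noteq> 0" using w_pow_n n_pos by (cases "w = 0") (auto simp: zero_power)

lemma w_neq_1: "w \<noteq> 1"
proof -
  have "w ^ 1 \<noteq> 1" using primitive n_ge_2 unfolding primitive_root_def by auto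
  then show ?thesis by simp
qed

lemma HAmul_assoc_fun: "HM (HM T S) R = HM T (HM S R)"
  by (intro ext HAmul_assoc[OF w_pow_n n_pos])

lemma act_Hmul: "ACT (Hmul n w h h') m = ACT h (ACT h' m)"
  using module_algebra by (simp add: is_module_algebra_def)

lemma act_Hone: "ACT (Hb n 0 0) m k = (if k < n then m k else 0)"
  using module_algebra by (simp add: is_module_algebra_def Hone_def)

lemma act_Amul: "ACT h (Amul n w m m') k = (\<Sum>a<n. \<Sum>b<n. \<Sum>a'<n. \<Sum>b'<n. Delta n w h a b a' b' *
             Amul n w (ACT (Hb n a b) m) (ACT (Hb n a' b') m') k)"
  using module_algebra by (simp add: is_module_algebra_def)

lemma act_Aone: "ACT h Ae0 k = Heps n h * Ae0 k"
  using module_algebra by (simp add: is_module_algebra_def Aone_def)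

lemma HHmul_unit_supported: "HHmul n w X (HHt n (Hb n 0 0) (Hb n 0 0)) = X" "HHmul n w (HHt n (Hb n 0 0) (Hb n 0 0)) X = X"
  if "\<And>c d c' d'. \<not> (c < n \<and> d < n \<and> c' < n \<and> d' < n) \<Longrightarrow> X c d c' d' = 0"
  using that by (auto simp: fun_eq_iff HHmul_unit_right HHmul_unit_left n_pos)

lemma Delta_g: "Delta n w gH c d c' d' = HHt n gH gH c d c' d'"
proof -
  have s: "\<And>c d c' d'. \<not> (c < n \<and> d < n \<and> c' < n \<and> d' < n) \<Longrightarrow> Dg n c d c' d' = (0::'k)"
    by (auto simp: Dg_def HHt_def)
  have d1: "HHmul n w (Dg n) (HHt n (Hb n 0 0) (Hb n 0 0)) = Dg n"
    by (rule HHmul_unit_supported(1)[OF s])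
  have "Delta n w gH c d c' d' = HHmul n w (HHpow n w (Dg n) 1) (HHpow n w (Dx n) 0) c d c' d'"
    using n_ge_2 by (intro Delta_Hb) auto
  also have "\<dots> = Dg n c d c' d'" by (simp only: One_nat_def HHpow_Suc HHpow_0 d1)
  finally show ?thesis by (simp add: Dg_def Hg_def)
qed

lemma Delta_x: "Delta n w xH c d c' d' = Dx n c d c' d'"
proof -
  have s: "\<And>c d c' d'. \<not> (c < n \<and> d < n \<and> c' < n \<and> d' < n) \<Longrightarrow> Dx n c d c' d' = (0::'k)"
    by (auto simp: Dx_def HHt_def)
  have d1: "HHmul n w (Dx n) (HHt n (Hb n 0 0) (Hb n 0 0)) = Dx n"
    by (rule HHmul_unit_supported(1)[OF s])
  have d2: "HHmul n w (HHt n (Hb n 0 0) (Hb n 0 0)) (Dx n) = Dx n"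
    by (rule HHmul_unit_supported(2)[OF s])
  have "Delta n w xH c d c' d' = HHmul n w (HHpow n w (Dg n) 0) (HHpow n w (Dx n) 1) c d c' d'"
    using n_ge_2 by (intro Delta_Hb) auto
  also have "\<dots> = Dx n c d c' d'" by (simp only: One_nat_def HHpow_Suc HHpow_0 d1 d2)
  finally show ?thesis .
qed

lemma act_g_Amul: "ACT gH (Amul n w m m') k = Amul n w (ACT gH m) (ACT gH m') k"
proof -
  have "ACT gH (Amul n w m m') k = (\<Sum>a<n. \<Sum>b<n. \<Sum>a'<n. \<Sum>b'<n. HHt n gH gH a b a' b' *
             Amul n w (ACT (Hb n a b) m) (ACT (Hb n a' b') m') k)"
    unfolding act_Amul by (intro sum.cong refl) (simp only: Delta_g)
  also have "\<dots> = Amul n w (ACT gH m) (ACT gH m') k"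
    using n_ge_2
    by (subst sum4_single_support[where a=1 and b=0 and c=1 and d=0]) (auto simp: HHt_Hb)
  finally show ?thesis .
qed

lemma act_x_Amul: "ACT xH (Amul n w m m') k = Amul n w (ACT xH m) m' k + Amul n w (ACT gH m) (ACT xH m') k"
proof -
  have "ACT xH (Amul n w m m') k = (\<Sum>a<n. \<Sum>b<n. \<Sum>a'<n. \<Sum>b'<n. HHt n xH (Hb n 0 0) a b a' b' *
             Amul n w (ACT (Hb n a b) m) (ACT (Hb n a' b') m') k) + (\<Sum>a<n. \<Sum>b<n. \<Sum>a'<n. \<Sum>b'<n. HHt n gH xH a b a' b' *
             Amul n w (ACT (Hb n a b) m) (ACT (Hb n a' b') m') k)"
    unfolding act_Amul
    by (simp only: Delta_x Dx_def Hx_def Hg_def Hone_def distrib_right sum.distrib)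
  also have "\<dots> = Amul n w (ACT xH m) (ACT (Hb n 0 0) m') k + Amul n w (ACT gH m) (ACT xH m') k"
  proof -
    have "(\<Sum>a<n. \<Sum>b<n. \<Sum>a'<n. \<Sum>b'<n. HHt n xH (Hb n 0 0) a b a' b' *
             Amul n w (ACT (Hb n a b) m) (ACT (Hb n a' b') m') k) = Amul n w (ACT xH m) (ACT (Hb n 0 0) m') k"
      using n_ge_2
      by (subst sum4_single_support[where a=0 and b=1 and c=0 and d=0]) (auto simp: HHt_Hb)
    moreover have "(\<Sum>a<n. \<Sum>b<n. \<Sum>a'<n. \<Sum>b'<n. HHt n gH xH a b a' b' *
             Amul n w (ACT (Hb n a b) m) (ACT (Hb n a' b') m') k) = Amul n w (ACT gH m) (ACT xH m') k"
      using n_ge_2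
      by (subst sum4_single_support[where a=1 and b=0 and c=0 and d=1]) (auto simp: HHt_Hb)
    ultimately show ?thesis by simp
  qed
  also have "Amul n w (ACT xH m) (ACT (Hb n 0 0) m') k = Amul n w (ACT xH m) m' k"
    by (rule Amul_cong) (simp_all add: act_Hone)
  finally show ?thesis .
qed

lemma Ae_Suc: "Suc i < n \<Longrightarrow> Ae n (Suc i) = Amul n w (Ae n 1) (Ae n i)"
  by (auto simp: fun_eq_iff Amul_basis)

lemma act_g_u: "ACT gH (Ae n 1) = (\<lambda>k. w * Ae n 1 k)"
  using g_acts_on_u by (simp add: Hg_def Au_def)

lemma act_x_u: "ACT xH (Ae n 1) = Ae0"
  using x_acts_on_u by (simp add: Hx_def Au_def Aone_def)

lemma act_g_Ae: "i < n \<Longrightarrow> ACT gH (Ae n i) = (\<lambda>k. w ^ i * Ae n i k)"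
proof (induction i)
  case 0 show ?case using n_ge_2 by (simp add: fun_eq_iff act_Aone Heps_Hb)
next
  case (Suc i)
  then have IH: "ACT gH (Ae n i) = (\<lambda>k. w ^ i * Ae n i k)" by simp
  have "ACT gH (Ae n (Suc i)) k = w ^ Suc i * Ae n (Suc i) k" for k
  proof -
    have "ACT gH (Ae n (Suc i)) k = ACT gH (Amul n w (Ae n 1) (Ae n i)) k"
      by (simp only: Ae_Suc[OF Suc.prems])
    also have "\<dots> = Amul n w (ACT gH (Ae n 1)) (ACT gH (Ae n i)) k" by (rule act_g_Amul)
    also have "\<dots> = Amul n w (\<lambda>k. w * Ae n 1 k) (\<lambda>k. w^i * Ae n i k) k"
      by (simp only: act_g_u IH)
    also have "\<dots> = w * w^i * Amul n w (Ae n 1) (Ae n i) k"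
      by (simp add: Amul_scal_left Amul_scal_right)
    also have "\<dots> = w ^ Suc i * Ae n (Suc i) k" by (simp only: Ae_Suc[OF Suc.prems] power_Suc)
    finally show ?thesis .
  qed
  then show ?case by auto
qed

lemma act_x_Ae: "i < n \<Longrightarrow> ACT xH (Ae n i) = (\<lambda>k. qint w i * Ae n (i - 1) k)"
proof (induction i)
  case 0 show ?case using n_ge_2 by (simp add: fun_eq_iff act_Aone Heps_Hb qint_def)
next
  case (Suc i)
  then have IH: "ACT xH (Ae n i) = (\<lambda>k. qint w i * Ae n (i - 1) k)" by simp
  have gi: "ACT gH (Ae n 1) = (\<lambda>k. w * Ae n 1 k)" by (rule act_g_u)
  have A: "Amul n w Ae0 (Ae n i) k = Ae n i k" for k using n_pos by (simp add: Amul_unit_left Ae_eq)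
  have B: "qint w i * Amul n w (Ae n 1) (Ae n (i - 1)) k = qint w i * Ae n i k" for k
  proof (cases i)
    case 0 then show ?thesis by (simp add: qint_def)
  next
    case (Suc j)
    then have "Suc j < n" using Suc.prems by simp
    show ?thesis unfolding Suc diff_Suc_1 Ae_Suc[OF \<open>Suc j < n\<close>, symmetric] ..
  qed
  have "ACT xH (Ae n (Suc i)) k = qint w (Suc i) * Ae n i k" for k
  proof -
    have "ACT xH (Ae n (Suc i)) k = ACT xH (Amul n w (Ae n 1) (Ae n i)) k"
      by (simp only: Ae_Suc[OF Suc.prems])
    also have "\<dots> = Amul n w (ACT xH (Ae n 1)) (Ae n i) k + Amul n w (ACT gH (Ae n 1)) (ACT xH (Ae n i)) k"
      by (rule act_x_Amul)
    also have "\<dots> = Amul n w Ae0 (Ae n i) k + Amul n w (\<lambda>k. w * Ae n 1 k) (\<lambda>k. qint w i * Ae n (i - 1) k) k"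
      by (simp only: act_x_u gi IH)
    also have "\<dots> = Ae n i k + w * (qint w i * Amul n w (Ae n 1) (Ae n (i - 1)) k)"
      by (simp only: A Amul_scal_left Amul_scal_right)
    also have "\<dots> = qint w (Suc i) * Ae n i k"
      by (simp only: B) (simp add: qint_Suc algebra_simps)
    finally show ?thesis .
  qed
  then show ?case by auto
qed

definition id_act :: "'k Hel \<Rightarrow> 'k HAel \<Rightarrow> 'k HAel" where
  "id_act h T = (\<lambda>c d k. \<Sum>p<n. \<Sum>q<n. \<Sum>i<n. T p q i * HAt n (Hb n p q) (ACT h (Ae n i)) c d k)"

lemma id_act_HAt: "id_act h (HAt n F M) = HAt n F (ACT h M)"
proof (intro ext)
  fix c d k
  show "id_act h (HAt n F M) c d k = HAt n F (ACT h M) c d k"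
  proof (cases "c < n \<and> d < n \<and> k < n")
    case True
    have "HAt n F (ACT h M) c d k = (\<Sum>p<n. \<Sum>q<n. F p q * Hb n p q c d) * (\<Sum>i<n. M i * ACT h (Ae n i) k)"
      using True by (simp add: HAt_def sum_Hb_expand act_expand_Ae[of n act0 h M k])
    also have "\<dots> = id_act h (HAt n F M) c d k"
      unfolding id_act_def using True
      by (simp only: sum_distrib_right, simp only: sum_distrib_left, intro sum.cong refl) (simp add: HAt_def mult_ac)
    finally show ?thesis ..
  qed (auto simp: id_act_def HAt_def)
qed

lemma id_act_sum: "id_act h (\<lambda>a b i. \<Sum>j\<in>J. G j a b i) = (\<lambda>c d k. \<Sum>j\<in>J. id_act h (G j) c d k)"
  unfolding id_act_def by (simp add: fun_eq_iff sum_distrib_right sum.swap[where B=J])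

lemma id_act_scal: "id_act h (\<lambda>a b i. s * G a b i) = (\<lambda>c d k. s * id_act h G c d k)"
  unfolding id_act_def by (simp add: fun_eq_iff sum_distrib_left mult_ac)

lemma id_act_HAmul_expand: "id_act h (HAmul n w T S) = (\<lambda>c d k. \<Sum>a<n. \<Sum>b<n. \<Sum>i<n. \<Sum>a'<n. \<Sum>b'<n. \<Sum>i'<n.
       T a b i * S a' b' i' * HAt n (Hmul n w (Hb n a b) (Hb n a' b')) (ACT h (Amul n w (Ae n i) (Ae n i'))) c d k)"
  unfolding HAmul_unfold by (simp add: id_act_sum id_act_scal id_act_HAt)

lemma HAmul_id_act_expand: "HAmul n w (id_act h T) (id_act h' S) = (\<lambda>c d k. \<Sum>a<n. \<Sum>b<n. \<Sum>i<n. \<Sum>a'<n. \<Sum>b'<n. \<Sum>i'<n.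
       T a b i * S a' b' i' * HAt n (Hmul n w (Hb n a b) (Hb n a' b')) (Amul n w (ACT h (Ae n i)) (ACT h' (Ae n i'))) c d k)"
  unfolding id_act_def
  by (simp add: fun_eq_iff HAmul_sum_left HAmul_sum_right HAmul_scal_left HAmul_scal_right HAmul_tensor sum_distrib_left mult_ac)

lemma id_act_g_HAmul: "id_act gH (HAmul n w T S) = HAmul n w (id_act gH T) (id_act gH S)"
proof -
  have "ACT gH (Amul n w (Ae n i) (Ae n i')) = Amul n w (ACT gH (Ae n i)) (ACT gH (Ae n i'))" for i i'
    by (rule ext) (rule act_g_Amul)
  then show ?thesis unfolding id_act_HAmul_expand HAmul_id_act_expand by simp
qed

lemma id_act_Hone: "a < n \<Longrightarrow> b < n \<Longrightarrow> i < n \<Longrightarrow> id_act (Hb n 0 0) S a b i = S a b i"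
  by (auto simp: id_act_def act_Hone HAt_def Hb_eq Ae_eq delta_simps cong: if_cong)

lemma id_act_x_HAmul: "id_act xH (HAmul n w T S) = (\<lambda>c d k. HAmul n w (id_act xH T) S c d k + HAmul n w (id_act gH T) (id_act xH S) c d k)"
proof -
  have e: "ACT xH (Amul n w (Ae n i) (Ae n i')) = (\<lambda>k. Amul n w (ACT xH (Ae n i)) (ACT (Hb n 0 0) (Ae n i')) k + Amul n w (ACT gH (Ae n i)) (ACT xH (Ae n i')) k)" for i i'
  proof (rule ext)
    fix k
    have "Amul n w (ACT xH (Ae n i)) (Ae n i') k = Amul n w (ACT xH (Ae n i)) (ACT (Hb n 0 0) (Ae n i')) k"
      by (rule Amul_cong) (simp_all add: act_Hone)
    then show "ACT xH (Amul n w (Ae n i) (Ae n i')) k = Amul n w (ACT xH (Ae n i)) (ACT (Hb n 0 0) (Ae n i')) k + Amul n w (ACT gH (Ae n i)) (ACT xH (Ae n i')) k"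
      by (simp only: act_x_Amul)
  qed
  have 1: "HAmul n w (id_act xH T) S = HAmul n w (id_act xH T) (id_act (Hb n 0 0) S)"
    by (intro ext HAmul_cong refl) (simp add: id_act_Hone)
  show ?thesis unfolding 1 id_act_HAmul_expand HAmul_id_act_expand e HAt_add
    by (simp add: fun_eq_iff distrib_left sum.distrib)
qed

section \<open>The coaction of \<open>u\<close>\<close>

text \<open>
  In the normal form \<open>x^j g^-(j+1) = \<omega>^(j e\<^sub>j) g^(e\<^sub>j) x^j\<close> of the terms of \<open>\<rho>(u)\<close>,
  \<open>e\<^sub>j = ginv_exp j\<close> is the exponent with \<open>g^-(j+1) = g^(e\<^sub>j)\<close>, and
  \<open>rho_coeff j = a\<^sub>j \<omega>^(j e\<^sub>j)\<close>.
\<close>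

definition ginv_exp :: "nat \<Rightarrow> nat" where "ginv_exp j = ((n - 1) * (j + 1)) mod n"

definition u_pow_Suc :: "nat \<Rightarrow> 'k Ael" where "u_pow_Suc j = Apow n w (Au n) (j + 1)"

definition rho_coeff :: "nat \<Rightarrow> 'k" where "rho_coeff j = acoef w j * w ^ (j * ginv_exp j)"

lemma ginv_exp_less: "ginv_exp j < n" using n_pos by (simp add: ginv_exp_def)

lemma qint_n_zero: "qint w n = 0"
proof -
  have "(w - 1) * qint w n = 0" using w_pow_n by (simp add: qint_geom)
  then show ?thesis using w_neq_1 by simp
qed

lemma w_ginv_exp: "w ^ ginv_exp j * w ^ (j + 1) = 1"
proof -
  have "w ^ ginv_exp j = w ^ ((n - 1) * (j + 1))" unfolding ginv_exp_def
    by (rule power_mod_order[OF w_pow_n, symmetric])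
  then have "w ^ ginv_exp j * w ^ (j + 1) = w ^ ((n - 1) * (j + 1) + (j + 1))"
    by (simp add: power_add)
  also have "(n - 1) * (j + 1) + (j + 1) = n * (j + 1)" using n_pos by (cases n) auto
  also have "w ^ (n * (j + 1)) = 1" using w_pow_n by (metis power_mult power_one)
  finally show ?thesis .
qed

lemma w_ginv_exp_Suc: "w ^ ginv_exp (Suc j) * w = w ^ ginv_exp j"
proof -
  have "w ^ ginv_exp (Suc j) * w * w ^ (j + 1) = 1" using w_ginv_exp[of "Suc j"]
    by (simp add: mult_ac)
  then have "w ^ ginv_exp (Suc j) * w * w ^ (j + 1) = w ^ ginv_exp j * w ^ (j + 1)"
    using w_ginv_exp[of j]
    by simp
  moreover have "w ^ (j + 1) \<noteq> 0" using w_nonzero by simp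
  ultimately show ?thesis by simp
qed

lemma rho_coeff_0: "rho_coeff 0 = 1" by (simp add: rho_coeff_def acoef_def)

text \<open>This is the identity the coefficients \<open>a\<^sub>j\<close> are chosen for.\<close>

lemma rho_coeff_recurrence: "rho_coeff j * (w ^ ginv_exp j - w) + rho_coeff (Suc j) * qint w (Suc (Suc j)) = 0"
proof -
  define \<iota> where "\<iota> = w ^ ginv_exp j"
  have it: "\<iota> * w ^ (j + 1) = 1" unfolding \<iota>_def by (rule w_ginv_exp)
  have i2: "w ^ ginv_exp (Suc j) * w = \<iota>" unfolding \<iota>_def by (rule w_ginv_exp_Suc)
  have b0: "rho_coeff j = acoef w j * \<iota> ^ j" unfolding rho_coeff_def \<iota>_def
    by (metis power_mult mult.commute)
  have pm: "w ^ (Suc j * ginv_exp (Suc j)) = (w ^ ginv_exp (Suc j)) ^ Suc j"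
    by (metis power_mult mult.commute)
  have "rho_coeff (Suc j) = acoef w j * (w - 1) * w ^ Suc j * (w ^ ginv_exp (Suc j)) ^ Suc j"
    unfolding rho_coeff_def acoef_Suc pm ..
  also have "\<dots> = acoef w j * (w - 1) * (w ^ ginv_exp (Suc j) * w) ^ Suc j"
    by (simp add: power_mult_distrib mult_ac)
  also have "\<dots> = acoef w j * (w - 1) * \<iota> ^ Suc j" by (simp add: i2)
  finally have b1: "rho_coeff (Suc j) = acoef w j * (w - 1) * \<iota> ^ Suc j" .
  have q: "(w - 1) * qint w (Suc (Suc j)) = w * w ^ (j + 1) - 1" by (simp add: qint_geom)
  have "rho_coeff j * (w ^ ginv_exp j - w) + rho_coeff (Suc j) * qint w (Suc (Suc j)) = acoef w j * \<iota> ^ j * (\<iota> - w + \<iota> * ((w - 1) * qint w (Suc (Suc j))))"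
    unfolding b0 b1 \<iota>_def[symmetric] by (simp add: algebra_simps)
  also have "\<iota> - w + \<iota> * ((w - 1) * qint w (Suc (Suc j))) = 0"
    unfolding q using it by (simp add: algebra_simps)
  finally show ?thesis by simp
qed

lemma u_pow_Suc_less: "Suc j < n \<Longrightarrow> u_pow_Suc j = Ae n (Suc j)"
  unfolding u_pow_Suc_def using Apow_Au[OF n_ge_2] by simp

lemma u_pow_Suc_n: "Suc j = n \<Longrightarrow> u_pow_Suc j = (\<lambda>k. w * Ae0 k)"
  unfolding u_pow_Suc_def using Apow_Au_n[OF n_ge_2] by simp

lemma act_g_u_pow_Suc: assumes "j < n" shows "ACT gH (u_pow_Suc j) = (\<lambda>k. w ^ Suc j * u_pow_Suc j k)"
proof (cases "Suc j < n")
  case True then show ?thesis unfolding u_pow_Suc_less[OF True] by (rule act_g_Ae)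
next
  case False
  then have s: "Suc j = n" using assms by simp
  have "ACT gH (u_pow_Suc j) k = w ^ Suc j * u_pow_Suc j k" for k
    unfolding u_pow_Suc_n[OF s] act_scal using act_g_Ae[OF n_pos] s w_pow_n
    by (simp del: One_nat_def)
  then show ?thesis by auto
qed

lemma act_x_u_pow_Suc: assumes "j < n" shows "ACT xH (u_pow_Suc j) = (\<lambda>k. qint w (Suc j) * Ae n j k)"
proof (cases "Suc j < n")
  case True then show ?thesis unfolding u_pow_Suc_less[OF True] using act_x_Ae[OF True]
    by (simp only: diff_Suc_1)
next
  case False
  then have s: "Suc j = n" using assms by simp
  have "ACT xH (u_pow_Suc j) k = qint w (Suc j) * Ae n j k" for k
    unfolding u_pow_Suc_n[OF s] act_scal using act_x_Ae[OF n_pos] s qint_n_zero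
    by (simp add: qint_def del: One_nat_def)
  then show ?thesis by auto
qed

lemma rho_u_eq: "U = (\<lambda>a b k. \<Sum>j<n. rho_coeff j * HAt n (Hb n (ginv_exp j) j) (u_pow_Suc j) a b k)"
proof -
  have "Hmul n w (Hpow n w (Hx n) j) (Hpow n w (Hginv n w) (j + 1)) = (\<lambda>c d. w ^ (j * ginv_exp j) * Hb n (ginv_exp j) j c d)" if "j < n" for j
  proof -
    have g: "Hpow n w (Hginv n w) (j + 1) = Hb n (ginv_exp j) 0"
      unfolding ginv_exp_def Hpow_Hginv[OF n_ge_2] Hb_mod ..
    have "Hmul n w (Hb n 0 j) (Hb n (ginv_exp j) 0) = (\<lambda>c d. w ^ (j * ginv_exp j) * Hb n (ginv_exp j) j c d)"
      using that ginv_exp_less n_pos by (simp add: fun_eq_iff Hmul_basis)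
    then show ?thesis unfolding g Hpow_Hx[OF n_ge_2] .
  qed
  then show ?thesis unfolding rho_u_def[of n w]
    by (intro ext sum.cong refl) (simp add: u_pow_Suc_def rho_coeff_def HAt_scal_left)
qed

lemma HAmul_tensor_unit_left: "HM (HAt n K Ae0) (HAt n K' m) = HAt n (Hmul n w K K') m"
  unfolding HAmul_tensor_fun by (rule HAt_cong) (simp_all add: Amul_unit_left n_pos)

lemma HAmul_tensor_unit_right: "HM (HAt n K' m) (HAt n K Ae0) = HAt n (Hmul n w K' K) m"
  unfolding HAmul_tensor_fun by (rule HAt_cong) (simp_all add: Amul_unit_right n_pos)

lemma Hmul_g_basis: "a < n \<Longrightarrow> b < n \<Longrightarrow> Hmul n w gH (Hb n a b) = Hb n (1 + a) b"
  using n_ge_2 by (simp add: fun_eq_iff Hmul_basis del: One_nat_def)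

lemma Hmul_x_basis: "a < n \<Longrightarrow> b < n \<Longrightarrow> Hmul n w xH (Hb n a b) = (\<lambda>c d. w ^ a * Hb n a (Suc b) c d)"
  using n_ge_2 by (simp add: fun_eq_iff Hmul_basis)

lemma Hmul_basis_x: "a < n \<Longrightarrow> b < n \<Longrightarrow> Hmul n w (Hb n a b) xH = Hb n a (Suc b)"
  using n_ge_2 by (simp add: fun_eq_iff Hmul_basis)

lemma Hmul_basis_g: "a < n \<Longrightarrow> b < n \<Longrightarrow> Hmul n w (Hb n a b) gH = (\<lambda>c d. w ^ b * Hb n (a + 1) b c d)"
  using n_ge_2 by (simp add: fun_eq_iff Hmul_basis del: One_nat_def)

lemma id_act_g_rho_u: "id_act gH U = (\<lambda>a b i. \<Sum>j<n. rho_coeff j * (w ^ Suc j * HAt n (Hb n (ginv_exp j) j) (u_pow_Suc j) a b i))"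
proof -
  have "id_act gH U = (\<lambda>a b i. \<Sum>j<n. rho_coeff j * HAt n (Hb n (ginv_exp j) j) (ACT gH (u_pow_Suc j)) a b i)"
    unfolding rho_u_eq by (simp add: id_act_sum id_act_scal id_act_HAt del: One_nat_def)
  also have "\<dots> = (\<lambda>a b i. \<Sum>j<n. rho_coeff j * (w ^ Suc j * HAt n (Hb n (ginv_exp j) j) (u_pow_Suc j) a b i))"
    by (intro ext sum.cong refl) (simp add: act_g_u_pow_Suc HAt_scal_right del: One_nat_def)
  finally show ?thesis .
qed

lemma id_act_x_rho_u: "id_act xH U = (\<lambda>a b i. \<Sum>j<n. rho_coeff j * (qint w (Suc j) * HAt n (Hb n (ginv_exp j) j) (Ae n j) a b i))"
proof -
  have "id_act xH U = (\<lambda>a b i. \<Sum>j<n. rho_coeff j * HAt n (Hb n (ginv_exp j) j) (ACT xH (u_pow_Suc j)) a b i)"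
    unfolding rho_u_eq by (simp add: id_act_sum id_act_scal id_act_HAt del: One_nat_def)
  also have "\<dots> = (\<lambda>a b i. \<Sum>j<n. rho_coeff j * (qint w (Suc j) * HAt n (Hb n (ginv_exp j) j) (Ae n j) a b i))"
    by (intro ext sum.cong refl) (simp add: act_x_u_pow_Suc HAt_scal_right del: One_nat_def)
  finally show ?thesis .
qed

lemma rho_u_YD_g: "HM g1 (id_act gH U) = (\<lambda>c d k. w * HM U g1 c d k)"
proof -
  have L: "HM g1 (id_act gH U) = (\<lambda>c d k. \<Sum>j<n. rho_coeff j * (w ^ Suc j * HAt n (Hb n (1 + ginv_exp j) j) (u_pow_Suc j) c d k))"
    unfolding id_act_g_rho_u
    by (simp add: fun_eq_iff HAmul_sum_right HAmul_scal_right HAmul_tensor_unit_left Hmul_g_basis ginv_exp_less del: One_nat_def)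
  have R: "HM U g1 = (\<lambda>c d k. \<Sum>j<n. rho_coeff j * (w ^ j * HAt n (Hb n (ginv_exp j + 1) j) (u_pow_Suc j) c d k))"
    unfolding rho_u_eq
    by (simp add: fun_eq_iff HAmul_sum_left HAmul_scal_left HAmul_tensor_unit_right Hmul_basis_g ginv_exp_less HAt_scal_left del: One_nat_def)
  show ?thesis unfolding L R by (simp add: fun_eq_iff sum_distrib_left mult_ac add.commute)
qed

lemma Hb_ginv_exp_Suc: "Hb n (1 + ginv_exp (Suc j)) = Hb n (ginv_exp j)"
proof -
  have "(1 + ginv_exp (Suc j)) mod n = (1 + (n - 1) * (Suc j + 1)) mod n"
    unfolding ginv_exp_def by (simp only: mod_add_right_eq)
  also have "1 + (n - 1) * (Suc j + 1) = (n - 1) * (j + 1) + n"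
    using n_pos by (cases n) (simp_all add: algebra_simps)
  also have "((n - 1) * (j + 1) + n) mod n = ginv_exp j"
    by (simp add: ginv_exp_def)
  finally show ?thesis by (metis Hb_mod)
qed

lemma Hb_ginv_exp_0: "Hb n (1 + ginv_exp 0) = Hb n 0"
proof -
  have "(1 + ginv_exp 0) mod n = 0"
    using n_pos by (simp add: ginv_exp_def)
  then show ?thesis by (metis Hb_mod)
qed

lemma rho_u_YD_x: "(\<lambda>c d k. HM x1 U c d k + HM g1 (id_act xH U) c d k) = (\<lambda>c d k. HAone n c d k + w * HM U x1 c d k)"
proof (intro ext)
  fix c d k
  define F where "F j = (HAt n (Hb n (ginv_exp j) (Suc j)) (u_pow_Suc j) c d k :: 'k)" for j
  define G where "G j = (HAt n (Hb n (1 + ginv_exp j) j) (Ae n j) c d k :: 'k)" for j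
  have X1: "HM x1 U c d k = (\<Sum>j<n. rho_coeff j * (w ^ ginv_exp j * F j))"
    unfolding rho_u_eq F_def
    by (simp add: HAmul_sum_right HAmul_scal_right HAmul_tensor_unit_left Hmul_x_basis ginv_exp_less HAt_scal_left del: One_nat_def)
  have X2: "HM g1 (id_act xH U) c d k = (\<Sum>j<n. rho_coeff j * (qint w (Suc j) * G j))"
    unfolding id_act_x_rho_u G_def
    by (simp add: HAmul_sum_right HAmul_scal_right HAmul_tensor_unit_left Hmul_g_basis ginv_exp_less del: One_nat_def)
  have X3: "HM U x1 c d k = (\<Sum>j<n. rho_coeff j * F j)"
    unfolding rho_u_eq F_def
    by (simp add: HAmul_sum_left HAmul_scal_left HAmul_tensor_unit_right Hmul_basis_x ginv_exp_less del: One_nat_def)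
  obtain m where nm: "n = Suc m" using n_pos by (cases n) auto
  have Fm: "F m = 0" unfolding F_def using nm by (simp add: Hb_degree_ge HAt_def)
  have G0: "G 0 = HAone n c d k" unfolding G_def Hb_ginv_exp_0 ..
  have GF: "G (Suc j) = F j" if "j < m" for j
  proof -
    have "u_pow_Suc j = Ae n (Suc j)" using that nm by (intro u_pow_Suc_less) simp
    then show ?thesis unfolding F_def G_def Hb_ginv_exp_Suc by simp
  qed
  have sp1: "(\<Sum>j<n. f j) = (\<Sum>j<m. f j) + f m" for f :: "nat \<Rightarrow> 'k" using nm
    by simp
  have sp2: "(\<Sum>j<n. f j) = f 0 + (\<Sum>j<m. f (Suc j))" for f :: "nat \<Rightarrow> 'k"
    unfolding nm
    by (rule sum.lessThan_Suc_shift)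
  have q1: "qint w (Suc 0) = 1" by (simp add: qint_def)
  have "HM x1 U c d k + HM g1 (id_act xH U) c d k = (\<Sum>j<m. rho_coeff j * (w ^ ginv_exp j * F j) + rho_coeff (Suc j) * (qint w (Suc (Suc j)) * F j)) + HAone n c d k"
    unfolding X1 X2 sp1[of "\<lambda>j. rho_coeff j * (w ^ ginv_exp j * F j)"] sp2[of "\<lambda>j. rho_coeff j * (qint w (Suc j) * G j)"]
    by (simp add: Fm G0 GF rho_coeff_0 q1 sum.distrib)
  also have "(\<Sum>j<m. rho_coeff j * (w ^ ginv_exp j * F j) + rho_coeff (Suc j) * (qint w (Suc (Suc j)) * F j)) = (\<Sum>j<m. w * (rho_coeff j * F j))"
  proof (intro sum.cong refl)
    fix j
    have "rho_coeff j * (w ^ ginv_exp j * F j) + rho_coeff (Suc j) * (qint w (Suc (Suc j)) * F j) - w * (rho_coeff j * F j)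
       = (rho_coeff j * (w ^ ginv_exp j - w) + rho_coeff (Suc j) * qint w (Suc (Suc j))) * F j" by (simp add: algebra_simps)
    then show "rho_coeff j * (w ^ ginv_exp j * F j) + rho_coeff (Suc j) * (qint w (Suc (Suc j)) * F j) = w * (rho_coeff j * F j)"
      by (simp add: rho_coeff_recurrence)
  qed
  also have "\<dots> = w * HM U x1 c d k"
    unfolding X3 sp1[of "\<lambda>j. rho_coeff j * F j"] by (simp add: Fm sum_distrib_left)
  finally show "HM x1 U c d k + HM g1 (id_act xH U) c d k = HAone n c d k + w * HM U x1 c d k"
    by simp
qed

lemma id_act_g_HAone: "id_act gH (HAone n) = HAone n"
proof -
  have "ACT gH Ae0 = (\<lambda>k. w ^ 0 * Ae0 k)" using act_g_Ae[of 0] n_pos by simp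
  then show ?thesis by (simp add: id_act_HAt)
qed

lemma id_act_x_HAone: "id_act xH (HAone n) = (\<lambda>a b i. 0)"
proof -
  have "ACT xH Ae0 = (\<lambda>k. qint w 0 * Ae n (0 - 1) k)" using act_x_Ae[of 0] n_pos by simp
  also have "\<dots> = (\<lambda>k. 0)" by (simp add: qint_def)
  finally have e: "ACT xH Ae0 = (\<lambda>k. 0)" .
  show ?thesis unfolding id_act_HAt e by (simp add: HAt_def fun_eq_iff)
qed

lemma rho_u_pow_YD_g: "i < n \<Longrightarrow> HM g1 (id_act gH (V i)) = (\<lambda>c d k. w ^ i * HM (V i) g1 c d k)"
proof (induction i)
  case 0
  show ?case
    by (simp only: HApow_0 id_act_g_HAone HAmul_one_right_fun[OF n_pos HA_supported_HAt] HAmul_one_left_fun[OF n_pos HA_supported_HAt] power_0 mult_1_left)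
next
  case (Suc i)
  then have IH: "HM g1 (id_act gH (V i)) = (\<lambda>c d k. w ^ i * HM (V i) g1 c d k)" by simp
  have "HM g1 (id_act gH (V (Suc i))) = HM g1 (HM (id_act gH U) (id_act gH (V i)))"
    by (simp only: HApow_Suc id_act_g_HAmul)
  also have "\<dots> = HM (HM g1 (id_act gH U)) (id_act gH (V i))" by (simp only: HAmul_assoc_fun)
  also have "\<dots> = HM (\<lambda>c d k. w * HM U g1 c d k) (id_act gH (V i))"
    by (simp only: rho_u_YD_g)
  also have "\<dots> = (\<lambda>c d k. w * HM U (HM g1 (id_act gH (V i))) c d k)"
    by (simp only: HAmul_scal_left_fun HAmul_assoc_fun)
  also have "\<dots> = (\<lambda>c d k. w * (w ^ i * HM U (HM (V i) g1) c d k))"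
    by (simp only: IH HAmul_scal_right_fun)
  also have "\<dots> = (\<lambda>c d k. w ^ Suc i * HM (V (Suc i)) g1 c d k)"
    by (simp add: HApow_Suc HAmul_assoc_fun mult.assoc)
  finally show ?case .
qed

lemma rho_u_pow_YD_x: "i < n \<Longrightarrow> (\<lambda>c d k. HM x1 (V i) c d k + HM g1 (id_act xH (V i)) c d k)
    = (\<lambda>c d k. qint w i * V (i - 1) c d k + w ^ i * HM (V i) x1 c d k)"
proof (induction i)
  case 0
  have q: "qint w 0 = 0" by (simp add: qint_def)
  show ?case
    by (simp only: HApow_0 id_act_x_HAone HAmul_zero_right HAmul_one_right_fun[OF n_pos HA_supported_HAt] HAmul_one_left_fun[OF n_pos HA_supported_HAt] power_0 mult_1_left q mult_zero_left add_0_right add_0_left)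
next
  case (Suc i)
  then have IH: "(\<lambda>c d k. HM x1 (V i) c d k + HM g1 (id_act xH (V i)) c d k)
    = (\<lambda>c d k. qint w i * V (i - 1) c d k + w ^ i * HM (V i) x1 c d k)" by simp
  have P: "qint w i * HM U (V (i - 1)) c d k = qint w i * V i c d k" for c d k
  proof (cases i)
    case 0 then show ?thesis by (simp add: qint_def)
  next
    case (Suc j) then show ?thesis by (simp add: HApow_Suc)
  qed
  have "(\<lambda>c d k. HM x1 (V (Suc i)) c d k + HM g1 (id_act xH (V (Suc i))) c d k)
     = (\<lambda>c d k. HM (HM x1 U) (V i) c d k + (HM (HM g1 (id_act xH U)) (V i) c d k + HM (HM g1 (id_act gH U)) (id_act xH (V i)) c d k))"
    by (simp only: HApow_Suc id_act_x_HAmul HAmul_add_right_fun HAmul_assoc_fun)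
  also have "\<dots> = (\<lambda>c d k. HM (\<lambda>c d k. HM x1 U c d k + HM g1 (id_act xH U) c d k) (V i) c d k + HM (\<lambda>c d k. w * HM U g1 c d k) (id_act xH (V i)) c d k)"
    by (simp only: HAmul_add_left_fun rho_u_YD_g add.assoc)
  also have "\<dots> = (\<lambda>c d k. HM (\<lambda>c d k. HAone n c d k + w * HM U x1 c d k) (V i) c d k + w * HM U (HM g1 (id_act xH (V i))) c d k)"
    by (simp only: rho_u_YD_x HAmul_scal_left_fun HAmul_assoc_fun)
  also have "\<dots> = (\<lambda>c d k. V i c d k + w * (HM U (\<lambda>c d k. HM x1 (V i) c d k + HM g1 (id_act xH (V i)) c d k) c d k))"
    by (simp add: HAmul_add_left_fun HAmul_add_right_fun HAmul_scal_left_fun HAmul_one_left_fun n_pos HA_supported_HApow HAmul_assoc_fun distrib_left add.assoc)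
  also have "\<dots> = (\<lambda>c d k. V i c d k + w * (qint w i * HM U (V (i - 1)) c d k + w ^ i * HM U (HM (V i) x1) c d k))"
    by (simp only: IH HAmul_add_right_fun HAmul_scal_right_fun)
  also have "\<dots> = (\<lambda>c d k. qint w (Suc i) * V (Suc (i) - 1) c d k + w ^ Suc i * HM (V (Suc i)) x1 c d k)"
    by (simp only: P distrib_left) (simp add: qint_Suc HApow_Suc HAmul_assoc_fun algebra_simps)
  finally show ?case .
qed

section \<open>Reduction to the generators\<close>

text \<open>
  For \<open>X = \<Sum> h\<^sub>1 \<otimes> h\<^sub>2\<close>, \<open>YD_left X T = \<Sum> (h\<^sub>1 \<otimes> 1) (id \<otimes> h\<^sub>2) T\<close> and
  \<open>YD_right X m = \<Sum> \<rho>(h\<^sub>1 \<cdot> m) (h\<^sub>2 \<otimes> 1)\<close>; with \<open>X = \<Delta> h\<close> and \<open>T = \<rho> m\<close> these are the two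
  sides of the Yetter--Drinfeld identity, and \<open>YD_left\<close> turns products in \<open>H \<otimes> H\<close> into
  composition.
\<close>

definition YD_left :: "'k HHel \<Rightarrow> 'k HAel \<Rightarrow> 'k HAel" where
  "YD_left X T = (\<lambda>c d k. \<Sum>a<n. \<Sum>b<n. \<Sum>a'<n. \<Sum>b'<n. \<Sum>p<n. \<Sum>q<n. \<Sum>i<n.
       X a b a' b' * T p q i * HAt n (Hmul n w (Hb n a b) (Hb n p q)) (ACT (Hb n a' b') (Ae n i)) c d k)"

definition YD_right :: "'k HHel \<Rightarrow> 'k Ael \<Rightarrow> 'k HAel" where
  "YD_right X m = (\<lambda>c d k. \<Sum>a<n. \<Sum>b<n. \<Sum>a'<n. \<Sum>b'<n. \<Sum>p<n. \<Sum>q<n. \<Sum>i<n.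
       X a b a' b' * rho n w (ACT (Hb n a b) m) p q i * HAt n (Hmul n w (Hb n p q) (Hb n a' b')) (Ae n i) c d k)"

lemma YD_lhs_eq_YD_left: "YD_lhs n w act0 h m = YD_left (Delta n w h) (rho n w m)"
  by (simp add: YD_lhs_def YD_left_def)

lemma YD_rhs_eq_YD_right: "YD_rhs n w act0 h m = YD_right (Delta n w h) m"
  by (simp add: YD_rhs_def YD_right_def)

lemma HAmul_unit_left_id_act: "HM (HAt n K Ae0) (id_act h T) = (\<lambda>c d k. \<Sum>p<n. \<Sum>q<n. \<Sum>i<n. T p q i * HAt n (Hmul n w K (Hb n p q)) (ACT h (Ae n i)) c d k)"
proof -
  have "HAt n (Hmul n w K (Hb n p q)) (Amul n w Ae0 (ACT h (Ae n i))) = HAt n (Hmul n w K (Hb n p q)) (ACT h (Ae n i))" for p q i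
    by (rule HAt_cong) (simp_all add: Amul_unit_left n_pos)
  then show ?thesis unfolding id_act_def
    by (simp add: fun_eq_iff HAmul_sum_right HAmul_scal_right HAmul_tensor)
qed

lemma HAmul_unit_right_expand: "HM T (HAt n K Ae0) = (\<lambda>c d k. \<Sum>p<n. \<Sum>q<n. \<Sum>i<n. T p q i * HAt n (Hmul n w (Hb n p q) K) (Ae n i) c d k)"
proof -
  have 1: "HM T (HAt n K Ae0) = HM (\<lambda>c d k. \<Sum>p<n. \<Sum>q<n. \<Sum>i<n. T p q i * HAt n (Hb n p q) (Ae n i) c d k) (HAt n K Ae0)"
    by (intro ext HAmul_cong refl) (auto simp: HAt_def Hb_eq Ae_eq delta_simps cong: if_cong)
  have "HAt n (Hmul n w (Hb n p q) K) (Amul n w (Ae n i) Ae0) = HAt n (Hmul n w (Hb n p q) K) (Ae n i)" if "i < n" for p q i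
    by (rule HAt_cong) (use that n_pos in \<open>auto simp: Amul_basis Ae_eq\<close>)
  then show ?thesis unfolding 1
    by (simp add: fun_eq_iff HAmul_sum_left HAmul_scal_left HAmul_tensor)
qed

lemma YD_left_basis: "YD_left X T = (\<lambda>c d k. \<Sum>a<n. \<Sum>b<n. \<Sum>a'<n. \<Sum>b'<n. X a b a' b' * HM (HAt n (Hb n a b) Ae0) (id_act (Hb n a' b') T) c d k)"
  unfolding YD_left_def HAmul_unit_left_id_act by (simp add: fun_eq_iff sum_distrib_left mult.assoc)

lemma YD_right_basis: "YD_right X m = (\<lambda>c d k. \<Sum>a<n. \<Sum>b<n. \<Sum>a'<n. \<Sum>b'<n. X a b a' b' * HM (rho n w (ACT (Hb n a b) m)) (HAt n (Hb n a' b') Ae0) c d k)"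
  unfolding YD_right_def HAmul_unit_right_expand
  by (simp add: fun_eq_iff sum_distrib_left mult.assoc)

lemma id_act_expand_Hb: "id_act h T = (\<lambda>c d k. \<Sum>p<n. \<Sum>q<n. h p q * id_act (Hb n p q) T c d k)"
proof (intro ext)
  fix c d k
  have "id_act h T c d k = (\<Sum>p'<n. \<Sum>q'<n. \<Sum>i<n. \<Sum>p<n. \<Sum>q<n. h p q * (T p' q' i * HAt n (Hb n p' q') (ACT (Hb n p q) (Ae n i)) c d k))"
  proof (cases "c < n \<and> d < n \<and> k < n")
    case True then show ?thesis unfolding id_act_def
      by (intro sum.cong refl) (simp add: HAt_def act_expand_Hb[of n act0 h _ k] sum_distrib_left sum_distrib_right mult_ac)
  qed (auto simp: id_act_def HAt_def)
  also have "\<dots> = (\<Sum>p<n. \<Sum>p'<n. \<Sum>q'<n. \<Sum>i<n. \<Sum>q<n. h p q * (T p' q' i * HAt n (Hb n p' q') (ACT (Hb n p q) (Ae n i)) c d k))"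
    by (rule sum_inner_to_outer4)
  also have "\<dots> = (\<Sum>p<n. \<Sum>q<n. \<Sum>p'<n. \<Sum>q'<n. \<Sum>i<n. h p q * (T p' q' i * HAt n (Hb n p' q') (ACT (Hb n p q) (Ae n i)) c d k))"
    by (rule sum.cong[OF refl], rule sum_inner_to_outer4)
  also have "\<dots> = (\<Sum>p<n. \<Sum>q<n. h p q * id_act (Hb n p q) T c d k)"
    unfolding id_act_def by (simp add: sum_distrib_left)
  finally show "id_act h T c d k = (\<Sum>p<n. \<Sum>q<n. h p q * id_act (Hb n p q) T c d k)" .
qed

lemma YD_left_HHt: "YD_left (HHt n f f') T = HM (HAt n f Ae0) (id_act f' T)"
proof -
  have "YD_left (HHt n f f') T = (\<lambda>c d k. \<Sum>a<n. \<Sum>b<n. f a b * (\<Sum>a'<n. \<Sum>b'<n. f' a' b' * HM (HAt n (Hb n a b) Ae0) (id_act (Hb n a' b') T) c d k))"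
    unfolding YD_left_basis
    by (intro ext sum.cong refl) (simp add: HHt_def sum_distrib_left mult.assoc)
  also have "\<dots> = HM (HAt n f Ae0) (id_act f' T)"
    by (subst HAt_expand_Hb[of n f Ae0], subst id_act_expand_Hb[of f' T]) (simp add: fun_eq_iff HAmul_sum_left HAmul_sum_right HAmul_scal_left HAmul_scal_right sum_distrib_left)
  finally show ?thesis .
qed

lemma rho_act_expand_Hb: "rho n w (ACT f m) = (\<lambda>a b k. \<Sum>p<n. \<Sum>q<n. f p q * rho n w (ACT (Hb n p q) m) a b k)"
proof -
  have "rho n w (ACT f m) = rho n w (\<lambda>i. \<Sum>p<n. \<Sum>q<n. f p q * ACT (Hb n p q) m i)"
    by (intro rho_cong) (rule act_expand_Hb)
  then show ?thesis by (simp add: rho_sum rho_scal)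
qed

lemma YD_right_HHt: "YD_right (HHt n f f') m = HM (rho n w (ACT f m)) (HAt n f' Ae0)"
proof -
  have "YD_right (HHt n f f') m = (\<lambda>c d k. \<Sum>a<n. \<Sum>b<n. f a b * (\<Sum>a'<n. \<Sum>b'<n. f' a' b' * HM (rho n w (ACT (Hb n a b) m)) (HAt n (Hb n a' b') Ae0) c d k))"
    unfolding YD_right_basis
    by (intro ext sum.cong refl) (simp add: HHt_def sum_distrib_left mult.assoc)
  also have "\<dots> = HM (rho n w (ACT f m)) (HAt n f' Ae0)"
    by (subst rho_act_expand_Hb[of f m], subst HAt_expand_Hb[of n f' Ae0]) (simp add: fun_eq_iff HAmul_sum_left HAmul_sum_right HAmul_scal_left HAmul_scal_right sum_distrib_left)
  finally show ?thesis .
qed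

lemma id_act_Hmul: "id_act (Hmul n w h h') T = id_act h (id_act h' T)"
proof -
  have "id_act h (id_act h' T) = (\<lambda>c d k. \<Sum>p<n. \<Sum>q<n. \<Sum>i<n. T p q i * HAt n (Hb n p q) (ACT h (ACT h' (Ae n i))) c d k)"
    unfolding id_act_def[of h' T] by (simp add: id_act_sum id_act_scal id_act_HAt)
  then show ?thesis by (simp add: id_act_def act_Hmul)
qed

lemma act_Hone_Ae: "i < n \<Longrightarrow> ACT (Hb n 0 0) (Ae n i) = Ae n i"
  by (auto simp: fun_eq_iff act_Hone Ae_eq)

lemma id_act_HAmul_unit_left: "id_act h (HM (HAt n K Ae0) S) = HM (HAt n K Ae0) (id_act h S)"
proof -
  have 1: "HM (HAt n K Ae0) S = HM (HAt n K Ae0) (id_act (Hb n 0 0) S)"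
    by (intro ext HAmul_cong refl) (simp add: id_act_Hone)
  show ?thesis unfolding 1 HAmul_unit_left_id_act
    by (simp add: id_act_sum id_act_scal id_act_HAt, intro ext sum.cong refl, simp add: act_Hone_Ae)
qed

lemma HAt_Hmul: "HAt n (Hmul n w K K') Ae0 = HM (HAt n K Ae0) (HAt n K' Ae0)"
proof -
  have "HAt n (Hmul n w K K') (Amul n w Ae0 Ae0) = HAt n (Hmul n w K K') Ae0"
    by (rule HAt_cong) (simp_all add: Amul_unit_left n_pos)
  then show ?thesis by (simp add: HAmul_tensor_fun)
qed

lemma id_act_HAmul_unit_right: "id_act h (HM S (HAt n K Ae0)) = HM (id_act h S) (HAt n K Ae0)"
proof -
  have 1: "HM (id_act h S) (HAt n K Ae0) = HM (id_act h S) (id_act (Hb n 0 0) (HAt n K Ae0))"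
    by (intro ext HAmul_cong refl) (simp add: id_act_Hone)
  show ?thesis unfolding 1 id_act_HAmul_expand HAmul_id_act_expand
  proof (intro ext sum.cong refl)
    fix c d k a b i a' b' i' assume "i \<in> {..<n}" "i' \<in> {..<n}"
    then show "S a b i * HAt n K Ae0 a' b' i' * HAt n (Hmul n w (Hb n a b) (Hb n a' b')) (ACT h (Amul n w (Ae n i) (Ae n i'))) c d k =
         S a b i * HAt n K Ae0 a' b' i' * HAt n (Hmul n w (Hb n a b) (Hb n a' b')) (Amul n w (ACT h (Ae n i)) (ACT (Hb n 0 0) (Ae n i'))) c d k"
    proof (cases "i' = 0")
      case True
      have e1: "Amul n w (Ae n i) Ae0 = Ae n i" using \<open>i \<in> _\<close> n_pos
        by (auto simp: fun_eq_iff Amul_basis Ae_eq)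
      have e2: "Amul n w (ACT h (Ae n i)) (ACT (Hb n 0 0) Ae0) = ACT h (Ae n i)"
      proof (rule ext)
        fix k
        have "ACT (Hb n 0 0) Ae0 = Ae0" using n_pos by (rule act_Hone_Ae)
        then show "Amul n w (ACT h (Ae n i)) (ACT (Hb n 0 0) Ae0) k = ACT h (Ae n i) k"
          using n_pos by (simp add: Amul_unit_right act_out_of_range)
      qed
      show ?thesis using True by (simp add: e1 e2)
    qed (simp add: HAt_def Ae_eq)
  qed
qed

lemma YD_left_sum: "YD_left (\<lambda>a b a' b'. \<Sum>j\<in>J. F j a b a' b') T = (\<lambda>c d k. \<Sum>j\<in>J. YD_left (F j) T c d k)"
  unfolding YD_left_basis by (simp add: fun_eq_iff sum_distrib_right sum.swap[where B=J])

lemma YD_left_scal: "YD_left (\<lambda>a b a' b'. s * F a b a' b') T = (\<lambda>c d k. s * YD_left F T c d k)"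
  unfolding YD_left_basis by (simp add: fun_eq_iff sum_distrib_left mult.assoc)

lemma YD_left_add: "YD_left (\<lambda>a b a' b'. F a b a' b' + G a b a' b') T = (\<lambda>c d k. YD_left F T c d k + YD_left G T c d k)"
  unfolding YD_left_basis by (simp add: fun_eq_iff distrib_right sum.distrib)

lemma YD_left_sum_arg: "YD_left X (\<lambda>a b i. \<Sum>j\<in>J. F j a b i) = (\<lambda>c d k. \<Sum>j\<in>J. YD_left X (F j) c d k)"
  unfolding YD_left_basis
  by (simp add: fun_eq_iff id_act_sum HAmul_sum_right sum_distrib_left sum.swap[where B=J])

lemma YD_left_scal_arg: "YD_left X (\<lambda>a b i. s * F a b i) = (\<lambda>c d k. s * YD_left X F c d k)"
  unfolding YD_left_basis
  by (simp add: fun_eq_iff id_act_scal HAmul_scal_right sum_distrib_left mult_ac)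

lemma YD_right_sum: "YD_right (\<lambda>a b a' b'. \<Sum>j\<in>J. F j a b a' b') m = (\<lambda>c d k. \<Sum>j\<in>J. YD_right (F j) m c d k)"
  unfolding YD_right_basis by (simp add: fun_eq_iff sum_distrib_right sum.swap[where B=J])

lemma YD_right_scal: "YD_right (\<lambda>a b a' b'. s * F a b a' b') m = (\<lambda>c d k. s * YD_right F m c d k)"
  unfolding YD_right_basis by (simp add: fun_eq_iff sum_distrib_left mult.assoc)

lemma YD_right_add: "YD_right (\<lambda>a b a' b'. F a b a' b' + G a b a' b') m = (\<lambda>c d k. YD_right F m c d k + YD_right G m c d k)"
  unfolding YD_right_basis by (simp add: fun_eq_iff distrib_right sum.distrib)

lemma YD_left_HHmul: "YD_left (HHmul n w X Y) T = YD_left X (YD_left Y T)"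
proof -
  have L: "YD_left (HHmul n w X Y) T = (\<lambda>c d k. \<Sum>a<n. \<Sum>b<n. \<Sum>a'<n. \<Sum>b'<n. \<Sum>p<n. \<Sum>q<n. \<Sum>p'<n. \<Sum>q'<n.
       X a b a' b' * Y p q p' q' * HM (HAt n (Hb n a b) Ae0) (HM (HAt n (Hb n p q) Ae0) (id_act (Hb n a' b') (id_act (Hb n p' q') T))) c d k)"
    unfolding HHmul_unfold
    by (simp add: YD_left_sum YD_left_scal YD_left_HHt HAt_Hmul id_act_Hmul HAmul_assoc_fun)
  have R: "YD_left X (YD_left Y T) = (\<lambda>c d k. \<Sum>a<n. \<Sum>b<n. \<Sum>a'<n. \<Sum>b'<n. X a b a' b' * (\<Sum>p<n. \<Sum>q<n. \<Sum>p'<n. \<Sum>q'<n.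
       Y p q p' q' * HM (HAt n (Hb n a b) Ae0) (HM (HAt n (Hb n p q) Ae0) (id_act (Hb n a' b') (id_act (Hb n p' q') T))) c d k))"
    unfolding YD_left_basis[of X] YD_left_basis[of Y]
    by (simp add: id_act_sum id_act_scal id_act_HAmul_unit_left HAmul_sum_right HAmul_scal_right)
  show ?thesis unfolding L R by (simp add: sum_distrib_left mult.assoc)
qed

lemma YD_left_HAmul_unit_right: "YD_left X (HM S (HAt n K Ae0)) = HM (YD_left X S) (HAt n K Ae0)"
  unfolding YD_left_basis
  by (simp add: fun_eq_iff id_act_HAmul_unit_right HAmul_assoc_fun[symmetric] HAmul_sum_left HAmul_scal_left)

definition YD_compatible :: "'k HHel \<Rightarrow> bool" where "YD_compatible X \<longleftrightarrow> (\<forall>m. YD_left X (rho n w m) = YD_right X m)"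

lemma YD_compatible_HHmul: assumes "YD_compatible X" "YD_compatible Y" shows "YD_compatible (HHmul n w X Y)"
  unfolding YD_compatible_def
proof
  fix m
  have "YD_left (HHmul n w X Y) (rho n w m) = YD_left X (YD_right Y m)"
    using assms(2) by (simp add: YD_left_HHmul YD_compatible_def)
  also have "\<dots> = (\<lambda>c d k. \<Sum>p<n. \<Sum>q<n. \<Sum>p'<n. \<Sum>q'<n. Y p q p' q' * HM (YD_right X (ACT (Hb n p q) m)) (HAt n (Hb n p' q') Ae0) c d k)"
    unfolding YD_right_basis[of Y]
    by (simp add: YD_left_sum_arg YD_left_scal_arg YD_left_HAmul_unit_right assms(1)[unfolded YD_compatible_def, rule_format])
  also have "\<dots> = (\<lambda>c d k. \<Sum>p<n. \<Sum>q<n. \<Sum>p'<n. \<Sum>q'<n. \<Sum>a<n. \<Sum>b<n. \<Sum>a'<n. \<Sum>b'<n.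
      X a b a' b' * Y p q p' q' * HM (HM (rho n w (ACT (Hb n a b) (ACT (Hb n p q) m))) (HAt n (Hb n a' b') Ae0)) (HAt n (Hb n p' q') Ae0) c d k)"
    unfolding YD_right_basis[of X]
    by (simp add: HAmul_sum_left HAmul_scal_left sum_distrib_left mult_ac)
  also have "\<dots> = (\<lambda>c d k. \<Sum>a<n. \<Sum>b<n. \<Sum>a'<n. \<Sum>b'<n. \<Sum>p<n. \<Sum>q<n. \<Sum>p'<n. \<Sum>q'<n.
      X a b a' b' * Y p q p' q' * HM (HM (rho n w (ACT (Hb n a b) (ACT (Hb n p q) m))) (HAt n (Hb n a' b') Ae0)) (HAt n (Hb n p' q') Ae0) c d k)"
    by (intro ext) (rule sum_swap4_4)
  also have "\<dots> = YD_right (HHmul n w X Y) m"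
    unfolding HHmul_unfold
    by (simp add: YD_right_sum YD_right_scal YD_right_HHt HAt_Hmul act_Hmul HAmul_assoc_fun)
  finally show "YD_left (HHmul n w X Y) (rho n w m) = YD_right (HHmul n w X Y) m" .
qed

lemma HA_supported_rho: "HA_supported n (rho n w m)"
  unfolding HA_supported_def rho_def
proof (intro allI impI sum.neutral ballI)
  fix c d k i assume "\<not> (c < n \<and> d < n \<and> k < n)"
  then show "m i * V i c d k = 0" using HA_supported_HApow[of n w U i]
    by (simp add: HA_supported_def)
qed

lemma rho_eq_rho_u_pow: "rho n w m = (\<lambda>a b k. \<Sum>i<n. m i * V i a b k)"
  by (simp add: rho_def fun_eq_iff)

lemma YD_compatible_unit: "YD_compatible (HHt n (Hb n 0 0) (Hb n 0 0))"
  unfolding YD_compatible_def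
proof
  fix m
  have 1: "YD_left (HHt n (Hb n 0 0) (Hb n 0 0)) (rho n w m) = rho n w m"
    unfolding YD_left_HHt using HA_supported_rho[of m]
    by (auto simp: fun_eq_iff HAmul_one_left n_pos id_act_Hone HA_supported_def)
  have "rho n w (ACT (Hb n 0 0) m) = rho n w m" by (rule rho_cong) (simp add: act_Hone)
  then have 2: "YD_right (HHt n (Hb n 0 0) (Hb n 0 0)) m = rho n w m"
    unfolding YD_right_HHt using HA_supported_rho[of m]
    by (auto simp: fun_eq_iff HAmul_one_right n_pos HA_supported_def)
  show "YD_left (HHt n (Hb n 0 0) (Hb n 0 0)) (rho n w m) = YD_right (HHt n (Hb n 0 0) (Hb n 0 0)) m"
    unfolding 1 2 ..
qed

lemma rho_act_g: "rho n w (ACT gH m) = (\<lambda>a b k. \<Sum>i<n. m i * (w ^ i * V i a b k))"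
proof -
  have "rho n w (ACT gH m) = rho n w (\<lambda>k. \<Sum>i<n. m i * (w ^ i * Ae n i k))"
    by (rule rho_cong) (simp add: act_expand_Ae[of n act0 gH m] act_g_Ae del: One_nat_def)
  also have "\<dots> = (\<lambda>a b k. \<Sum>i<n. m i * (w ^ i * rho n w (Ae n i) a b k))"
    by (simp add: rho_sum rho_scal)
  also have "\<dots> = (\<lambda>a b k. \<Sum>i<n. m i * (w ^ i * V i a b k))"
    by (intro ext sum.cong refl) (simp add: rho_Ae)
  finally show ?thesis .
qed

lemma rho_act_x: "rho n w (ACT xH m) = (\<lambda>a b k. \<Sum>i<n. m i * (qint w i * V (i - 1) a b k))"
proof -
  have "rho n w (ACT xH m) = rho n w (\<lambda>k. \<Sum>i<n. m i * (qint w i * Ae n (i - 1) k))"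
    by (rule rho_cong) (simp add: act_expand_Ae[of n act0 xH m] act_x_Ae del: One_nat_def)
  also have "\<dots> = (\<lambda>a b k. \<Sum>i<n. m i * (qint w i * rho n w (Ae n (i - 1)) a b k))"
    by (simp add: rho_sum rho_scal)
  also have "\<dots> = (\<lambda>a b k. \<Sum>i<n. m i * (qint w i * V (i - 1) a b k))"
    by (intro ext sum.cong refl) (simp add: rho_Ae)
  finally show ?thesis .
qed

lemma YD_compatible_Dg: "YD_compatible (Dg n)"
  unfolding YD_compatible_def
proof
  fix m
  have D: "Dg n = HHt n gH gH" by (simp add: Dg_def Hg_def)
  have "YD_left (Dg n) (rho n w m) = (\<lambda>c d k. \<Sum>i<n. m i * HM g1 (id_act gH (V i)) c d k)"
    unfolding D YD_left_HHt rho_eq_rho_u_pow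
    by (simp add: fun_eq_iff id_act_sum id_act_scal HAmul_sum_right HAmul_scal_right)
  also have "\<dots> = (\<lambda>c d k. \<Sum>i<n. m i * (w ^ i * HM (V i) g1 c d k))"
    by (intro ext sum.cong refl) (simp add: rho_u_pow_YD_g del: One_nat_def)
  also have "\<dots> = YD_right (Dg n) m"
    unfolding D YD_right_HHt rho_act_g by (simp add: fun_eq_iff HAmul_sum_left HAmul_scal_left)
  finally show "YD_left (Dg n) (rho n w m) = YD_right (Dg n) m" .
qed

lemma YD_compatible_Dx: "YD_compatible (Dx n)"
  unfolding YD_compatible_def
proof
  fix m
  have D: "Dx n = (\<lambda>a b a' b'. HHt n xH (Hb n 0 0) a b a' b' + HHt n gH xH a b a' b')"
    by (simp add: Dx_def Hg_def Hx_def Hone_def)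
  have "YD_left (Dx n) (rho n w m) = (\<lambda>c d k. HM x1 (id_act (Hb n 0 0) (rho n w m)) c d k + HM g1 (id_act xH (rho n w m)) c d k)"
    unfolding D YD_left_add YD_left_HHt ..
  also have "\<dots> = (\<lambda>c d k. HM x1 (rho n w m) c d k + HM g1 (id_act xH (rho n w m)) c d k)"
    by (intro ext arg_cong2[where f="(+)"] HAmul_cong refl) (simp_all add: id_act_Hone)
  also have "\<dots> = (\<lambda>c d k. \<Sum>i<n. m i * (HM x1 (V i) c d k + HM g1 (id_act xH (V i)) c d k))"
    unfolding rho_eq_rho_u_pow
    by (simp add: fun_eq_iff id_act_sum id_act_scal HAmul_sum_right HAmul_scal_right sum.distrib distrib_left)
  also have "\<dots> = (\<lambda>c d k. \<Sum>i<n. m i * (qint w i * V (i - 1) c d k + w ^ i * HM (V i) x1 c d k))"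
  proof (intro ext sum.cong refl)
    fix c d k i assume "i \<in> {..<n}"
    then show "m i * (HM x1 (V i) c d k + HM g1 (id_act xH (V i)) c d k) = m i * (qint w i * V (i - 1) c d k + w ^ i * HM (V i) x1 c d k)"
      using fun_cong[OF fun_cong[OF fun_cong[OF rho_u_pow_YD_x[of i]]], of c d k]
      by (simp del: One_nat_def)
  qed
  also have "\<dots> = (\<lambda>c d k. HM (rho n w (ACT xH m)) (HAone n) c d k + HM (rho n w (ACT gH m)) x1 c d k)"
  proof -
    have "HM (rho n w (ACT xH m)) (HAone n) = rho n w (ACT xH m)"
      by (rule HAmul_one_right_fun[OF n_pos HA_supported_rho])
    then show ?thesis unfolding rho_act_g
      by (simp add: rho_act_x fun_eq_iff HAmul_sum_left HAmul_scal_left sum.distrib distrib_left del: One_nat_def)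
  qed
  also have "\<dots> = YD_right (Dx n) m"
    unfolding D YD_right_add YD_right_HHt ..
  finally show "YD_left (Dx n) (rho n w m) = YD_right (Dx n) m" .
qed

lemma YD_compatible_HHpow: "YD_compatible X \<Longrightarrow> YD_compatible (HHpow n w X c)"
  by (induction c) (simp_all add: HHpow_0 HHpow_Suc YD_compatible_unit YD_compatible_HHmul)

lemma YD_identity: "YD_lhs n w act0 h m = YD_rhs n w act0 h m"
proof -
  have "YD_lhs n w act0 h m = (\<lambda>a b i. \<Sum>c<n. \<Sum>d<n. h c d * YD_left (HHmul n w (HHpow n w (Dg n) c) (HHpow n w (Dx n) d)) (rho n w m) a b i)"
    unfolding YD_lhs_eq_YD_left Delta_def by (simp add: YD_left_sum YD_left_scal)
  also have "\<dots> = (\<lambda>a b i. \<Sum>c<n. \<Sum>d<n. h c d * YD_right (HHmul n w (HHpow n w (Dg n) c) (HHpow n w (Dx n) d)) m a b i)"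
    using YD_compatible_HHmul[OF YD_compatible_HHpow[OF YD_compatible_Dg] YD_compatible_HHpow[OF YD_compatible_Dx]]
    by (simp add: YD_compatible_def)
  also have "\<dots> = YD_rhs n w act0 h m"
    unfolding YD_rhs_eq_YD_right Delta_def by (simp add: YD_right_sum YD_right_scal)
  finally show ?thesis .
qed

end

theorem proposition5p3:
  fixes n :: nat and w :: "'k::field" and act0 :: "nat \<Rightarrow> nat \<Rightarrow> nat \<Rightarrow> 'k Ael"
  assumes "CHAR('k) = 0"
    and "2 \<le> n"
    and "primitive_root n w"
    and "is_module_algebra n w act0"
    and "act n act0 (Hg n) (Au n) = (\<lambda>k. w * Au n k)"
    and "act n act0 (Hx n) (Au n) = Aone n"
  shows "\<forall>h m. YD_lhs n w act0 h m = YD_rhs n w act0 h m"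
proof -
  \<comment> \<open>The characteristic is irrelevant: only \<open>\<omega> \<noteq> 1\<close> and \<open>\<omega>\<^sup>n = 1\<close> are used.\<close>
  interpret taft_action n w act0 using assms by unfold_locales auto
  show ?thesis using YD_identity by blast
qed

end
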